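(* The right $D(\mathfrak{D}_4)$-module $V=V_{17}\oplus V_{20}\oplus V_{21}$ (defined in the context) is inner faithful; in fact every simple $D(\mathfrak{D}_4)$-module occurs as a direct summand of $V^{\otimes m}$ for some $m\in\{1,2,3,4\}$.
   Context: Let $\Bbbk=\mathbb{C}$, $i=\sqrt{-1}$, and $\mathfrak{D}_4=\langle r,s\mid r^4=e,\ s^2=r^2,\ rsrs^{-1}=e\rangle$ (quaternion group of order 8). The Drinfeld double $D(G)$ of a finite group $G$ has basis $\{\phi_g h\}$, multiplication $(\phi_g h)(\phi_{g'}h')=\delta_{g,hg'h^{-1}}\phi_g hh'$, comultiplication $\Delta(\phi_g h)=\sum_x\phi_xh\otimes\phi_{x^{-1}g}h$, counit $\epsilon(\phi_gh)=\delta_{g,e}$; it is semisimple over $\mathbb{C}$. A right $D(G)$-module is a $G$-graded vector space $V=\bigoplus_xV_x$ with right $G$-action satisfying $V_x\cdot g\subseteq V_{g^{-1}xg}$, $\phi_x$ acting as projection onto $V_x$; tensor products are graded by products of grades with diagonal $G$-action. A module $V$ over a Hopf algebra $H$ is inner faithful if there is no nonzero Hopf ideal $I$ of $H$ with $VI=0$. The modules: $V_{17}$ has basis $u$ (grade $s$), $v$ (grade $sr^2$) with $u\cdot r=v$, $u\cdot s=-iu$, $v\cdot r=-u$, $v\cdot s=iv$. $V_{20}$ has basis $u$ (grade $sr$), $v$ (grade $sr^3$) with $u\cdot r=-v$, $u\cdot s=v$, $v\cdot r=-u$, $v\cdot s=u$. $V_{21}$ has basis $u$ (grade $sr$), $v$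 (grade $sr^3$) with $u\cdot r=-iv$, $u\cdot s=v$, $v\cdot r=-iu$, $v\cdot s=-u$. *)

theory Defs
  imports Complex_Main
begin

text \<open>Elements are stored in the normal form r^a s^b with a < 4, b < 2.
  Relations: r^4 = e, s^2 = r^2, s r s^-1 = r^-1 (equivalently r s r s^-1 = e).\<close>

typedef q8 = "{(a::nat, b::nat). a < 4 \<and> b < 2}"
  by (rule exI[of _ "(0,0)"]) simp

definition qmk :: "nat \<Rightarrow> nat \<Rightarrow> q8" where
  "qmk a b = Abs_q8 (a mod 4, b mod 2)"

definition qmul :: "q8 \<Rightarrow> q8 \<Rightarrow> q8" where
  "qmul x y = (case Rep_q8 x of (a, b) \<Rightarrow> case Rep_q8 y of (c, d) \<Rightarrow>
      qmk (a + (if b = 0 then c else 4 - c) + (if b = 1 \<and> d = 1 then 2 else 0)) (b + d))"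

definition qinv :: "q8 \<Rightarrow> q8" where
  "qinv x = (case Rep_q8 x of (a, b) \<Rightarrow> if b = 0 then qmk (4 - a) 0 else qmk (a + 2) 1)"

definition qe :: q8 where "qe = qmk 0 0"
definition qr :: q8 where "qr = qmk 1 0"
definition qs :: q8 where "qs = qmk 0 1"

definition qpow :: "q8 \<Rightarrow> nat \<Rightarrow> q8" where
  "qpow x n = (qmul x ^^ n) qe"

instance q8 :: finite
proof
  have "(UNIV :: q8 set) = Abs_q8 ` {(a::nat, b::nat). a < 4 \<and> b < 2}"
    by (metis type_definition.Abs_image type_definition_q8)
  moreover have "finite {(a::nat, b::nat). a < 4 \<and> b < 2}"
    by (rule finite_subset[of _ "{..<4} \<times> {..<2}"]) auto
  ultimately show "finite (UNIV :: q8 set)" by (metis finite_imageI)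
qed

text \<open>An element x of D(G) is given by its coefficients: x = sum of x(g,h) phi_g h.
  Elements of D(G) (x) D(G) are coefficient functions on pairs of basis elements.\<close>

type_synonym dd = "q8 \<times> q8 \<Rightarrow> complex"

definition dmul :: "dd \<Rightarrow> dd \<Rightarrow> dd" where
  "dmul x y = (\<lambda>(g, k). \<Sum>p\<in>UNIV. \<Sum>q\<in>UNIV.
     if fst p = g \<and> fst p = qmul (qmul (snd p) (fst q)) (qinv (snd p)) \<and> qmul (snd p) (snd q) = k
     then x p * y q else 0)"

text \<open>Delta(phi_g h) = sum_x phi_x h (x) phi_{x^-1 g} h.\<close>
definition dcomul :: "dd \<Rightarrow> (q8 \<times> q8) \<times> (q8 \<times> q8) \<Rightarrow> complex" where
  "dcomul x = (\<lambda>(p, q). if snd p = snd q then x (qmul (fst p) (fst q), snd p) else 0)"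

text \<open>epsilon(phi_g h) = delta_{g,e}.\<close>
definition dcounit :: "dd \<Rightarrow> complex" where
  "dcounit x = (\<Sum>h\<in>UNIV. x (qe, h))"

text \<open>Antipode S(phi_g h) = h^-1 phi_{g^-1} = phi_{h^-1 g^-1 h} h^-1.\<close>
definition dantipode :: "dd \<Rightarrow> dd" where
  "dantipode x = (\<lambda>(g, h). x (qmul (qmul (qinv h) (qinv g)) h, qinv h))"

definition tensor :: "('a \<Rightarrow> complex) \<Rightarrow> ('b \<Rightarrow> complex) \<Rightarrow> 'a \<times> 'b \<Rightarrow> complex" where
  "tensor a b = (\<lambda>(p, q). a p * b q)"

definition csubspace :: "('a \<Rightarrow> complex) set \<Rightarrow> bool" where
  "csubspace U \<longleftrightarrow> (\<lambda>_. 0) \<in> U \<and> (\<forall>x\<in>U. \<forall>y\<in>U. (\<lambda>p. x p + y p) \<in> U)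
     \<and> (\<forall>c. \<forall>x\<in>U. (\<lambda>p. c * x p) \<in> U)"

inductive_set cspan :: "('a \<Rightarrow> complex) set \<Rightarrow> ('a \<Rightarrow> complex) set" for S where
  zero: "(\<lambda>_. 0) \<in> cspan S"
| add: "x \<in> S \<Longrightarrow> y \<in> cspan S \<Longrightarrow> (\<lambda>p. c * x p + y p) \<in> cspan S"

text \<open>I is a two-sided ideal, a coideal (Delta(I) in I(x)H + H(x)I, epsilon(I) = 0)
  and stable under the antipode.  I(x)H + H(x)I is the span of the pure tensors a(x)b
  with a in I or b in I.\<close>
definition hopf_ideal :: "dd set \<Rightarrow> bool" where
  "hopf_ideal I \<longleftrightarrow> csubspace I
     \<and> (\<forall>x\<in>I. \<forall>y. dmul x y \<in> I \<and> dmul y x \<in> I)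
     \<and> (\<forall>x\<in>I. dcounit x = 0)
     \<and> (\<forall>x\<in>I. dcomul x \<in> cspan {tensor a b | a b. a \<in> I \<or> b \<in> I})
     \<and> (\<forall>x\<in>I. dantipode x \<in> I)"

text \<open>A module with basis indexed by B: act g h i j is the coefficient of e_j in e_i . (phi_g h).\<close>

type_synonym 'b dact = "q8 \<Rightarrow> q8 \<Rightarrow> 'b \<Rightarrow> 'b \<Rightarrow> complex"

definition is_module :: "'b set \<Rightarrow> 'b dact \<Rightarrow> bool" where
  "is_module B act \<longleftrightarrow>
     (\<forall>g h g' h'. \<forall>i\<in>B. \<forall>k\<in>B.
        (\<Sum>j\<in>B. act g h i j * act g' h' j k)
          = (if g = qmul (qmul h g') (qinv h) then act g (qmul h h') i k else 0))
     \<and> (\<forall>i\<in>B. \<forall>k\<in>B. (\<Sum>g\<in>UNIV. act g qe i k) = (if i = k then 1 else 0))"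

definition Vec :: "'b set \<Rightarrow> ('b \<Rightarrow> complex) set" where
  "Vec B = {v. \<forall>i. i \<notin> B \<longrightarrow> v i = 0}"

definition vact :: "'b set \<Rightarrow> 'b dact \<Rightarrow> q8 \<Rightarrow> q8 \<Rightarrow> ('b \<Rightarrow> complex) \<Rightarrow> ('b \<Rightarrow> complex)" where
  "vact B act g h v = (\<lambda>j. if j \<in> B then \<Sum>i\<in>B. v i * act g h i j else 0)"

definition dvact :: "'b set \<Rightarrow> 'b dact \<Rightarrow> dd \<Rightarrow> ('b \<Rightarrow> complex) \<Rightarrow> ('b \<Rightarrow> complex)" where
  "dvact B act x v = (\<lambda>j. if j \<in> B then \<Sum>i\<in>B. \<Sum>p\<in>UNIV. v i * x p * act (fst p) (snd p) i j else 0)"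

definition submodule :: "'b set \<Rightarrow> 'b dact \<Rightarrow> ('b \<Rightarrow> complex) set \<Rightarrow> bool" where
  "submodule B act U \<longleftrightarrow> U \<subseteq> Vec B \<and> csubspace U \<and> (\<forall>v\<in>U. \<forall>g h. vact B act g h v \<in> U)"

definition simple_module :: "'b set \<Rightarrow> 'b dact \<Rightarrow> bool" where
  "simple_module B act \<longleftrightarrow> B \<noteq> {} \<and>
     (\<forall>U. submodule B act U \<longrightarrow> U = {\<lambda>_. 0} \<or> U = Vec B)"

text \<open>Module homomorphism W -> W' given by a matrix F: e_i maps to sum_j F i j e'_j.\<close>
definition module_hom :: "'b set \<Rightarrow> 'b dact \<Rightarrow> 'c set \<Rightarrow> 'c dact \<Rightarrow> ('b \<Rightarrow> 'c \<Rightarrow> complex) \<Rightarrow> bool" where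
  "module_hom B act C act' F \<longleftrightarrow>
     (\<forall>g h. \<forall>i\<in>B. \<forall>k\<in>C. (\<Sum>j\<in>C. F i j * act' g h j k) = (\<Sum>j\<in>B. act g h i j * F j k))"

text \<open>W is (isomorphic to) a direct summand of W': a split monomorphism W -> W'.\<close>
definition direct_summand :: "'b set \<Rightarrow> 'b dact \<Rightarrow> 'c set \<Rightarrow> 'c dact \<Rightarrow> bool" where
  "direct_summand B act C act' \<longleftrightarrow> (\<exists>F G. module_hom B act C act' F \<and> module_hom C act' B act G
     \<and> (\<forall>i\<in>B. \<forall>k\<in>B. (\<Sum>j\<in>C. F i j * G j k) = (if i = k then 1 else 0)))"

definition inner_faithful :: "'b set \<Rightarrow> 'b dact \<Rightarrow> bool" where
  "inner_faithful B act \<longleftrightarrow> \<not> (\<exists>I. hopf_ideal I \<and> I \<noteq> {\<lambda>_. 0}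
      \<and> (\<forall>x\<in>I. \<forall>v. \<forall>j\<in>B. dvact B act x v j = 0))"

text \<open>Module from a G-graded space with homogeneous basis (grade gr) and right G-action
  with matrices A h: e_i . (phi_g h) = delta_{gr i, g} e_i . h.\<close>
definition grmod :: "('b \<Rightarrow> q8) \<Rightarrow> (q8 \<Rightarrow> 'b \<Rightarrow> 'b \<Rightarrow> complex) \<Rightarrow> 'b dact" where
  "grmod gr A g h i j = (if gr i = g then A h i j else 0)"

datatype vb = U17 | V17 | U20 | V20 | U21 | V21

instance vb :: finite
proof
  have "(UNIV :: vb set) = {U17, V17, U20, V20, U21, V21}"
    using vb.exhaust by auto
  then show "finite (UNIV :: vb set)" by (metis finite.emptyI finite_insert)
qed

definition mmul :: "(vb \<Rightarrow> vb \<Rightarrow> complex) \<Rightarrow> (vb \<Rightarrow> vb \<Rightarrow> complex) \<Rightarrow> vb \<Rightarrow> vb \<Rightarrow> complex" where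
  "mmul M N i k = (\<Sum>j\<in>UNIV. M i j * N j k)"

definition mid :: "vb \<Rightarrow> vb \<Rightarrow> complex" where
  "mid i k = (if i = k then 1 else 0)"

definition mpow :: "(vb \<Rightarrow> vb \<Rightarrow> complex) \<Rightarrow> nat \<Rightarrow> vb \<Rightarrow> vb \<Rightarrow> complex" where
  "mpow M n = ((\<lambda>X. mmul X M) ^^ n) mid"

text \<open>VR b c = coefficient of c in b . r ; VS likewise for s.\<close>
fun VR :: "vb \<Rightarrow> vb \<Rightarrow> complex" where
  "VR U17 V17 = 1"
| "VR V17 U17 = -1"
| "VR U20 V20 = -1"
| "VR V20 U20 = -1"
| "VR U21 V21 = - \<i>"
| "VR V21 U21 = - \<i>"
| "VR _ _ = 0"

fun VS :: "vb \<Rightarrow> vb \<Rightarrow> complex" where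
  "VS U17 U17 = - \<i>"
| "VS V17 V17 = \<i>"
| "VS U20 V20 = 1"
| "VS V20 U20 = 1"
| "VS U21 V21 = 1"
| "VS V21 U21 = -1"
| "VS _ _ = 0"

definition VA :: "q8 \<Rightarrow> vb \<Rightarrow> vb \<Rightarrow> complex" where
  "VA h = (case Rep_q8 h of (a, b) \<Rightarrow> mmul (mpow VR a) (mpow VS b))"

fun Vgr :: "vb \<Rightarrow> q8" where
  "Vgr U17 = qs"
| "Vgr V17 = qmul qs (qpow qr 2)"
| "Vgr U20 = qmul qs qr"
| "Vgr V20 = qmul qs (qpow qr 3)"
| "Vgr U21 = qmul qs qr"
| "Vgr V21 = qmul qs (qpow qr 3)"

section \<open>Tensor powers of V, basis: lists of length m\<close>

fun tgr :: "vb list \<Rightarrow> q8" where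
  "tgr [] = qe"
| "tgr (b # bs) = qmul (Vgr b) (tgr bs)"

fun tA :: "q8 \<Rightarrow> vb list \<Rightarrow> vb list \<Rightarrow> complex" where
  "tA h [] [] = 1"
| "tA h (b # bs) (c # cs) = VA h b c * tA h bs cs"
| "tA h _ _ = 0"

end

theory Submission
  imports Defs
begin

text \<open>
  If \<open>V \<cdot> I = 0\<close> for a Hopf ideal \<open>I\<close>, every matrix coefficient of \<open>V\<close>, viewed as a functional
  on \<open>D(Q\<^sub>8)\<close>, annihilates \<open>I\<close>. As \<open>I\<close> is a coideal, the annihilating functionals are closed
  under the product dual to \<open>\<Delta>\<close>. On grade \<open>1\<close>, polynomials in products of four matrix
  coefficients give the delta functions of all group elements, and multiplying by matrix
  coefficients moves them to every grade; so every coordinate functional kills \<open>I\<close>, i.e. \<open>I = 0\<close>.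

  A simple module \<open>B\<close> contains a vector of some grade \<open>g\<close>, and \<open>g\<close> is conjugate to one of
  \<open>1, r\<^sup>2, r, s, r\<^sup>3s\<close>. The unit of the group algebra of the centraliser of \<open>g\<^sub>0\<close> is a sum of
  primitive idempotents \<open>c\<close>, so \<open>\<phi>\<^sub>g\<^sub>0 c\<close> acts nonzero on \<open>B\<close> for one of them, and for each \<open>c\<close>
  an explicit word \<open>t\<close> of length at most 4 has \<open>\<phi>\<^sub>g\<^sub>0 c e\<^sub>t \<noteq> 0\<close> in \<open>V\<^sup>\<otimes>\<^sup>|\<^sup>t\<^sup>|\<close>. Averaging
  rank-one maps over the group yields module maps \<open>B \<rightarrow> V\<^sup>\<otimes>\<^sup>|\<^sup>t\<^sup>|\<close> and back whose composite
  is, by simplicity of \<open>B\<close>, a nonzero scalar.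
\<close>

section \<open>The quaternion group\<close>

declare One_nat_def [simp del]

lemma Rep_q8_qmk [simp]: "Rep_q8 (qmk a b) = (a mod 4, b mod 2)"
  unfolding qmk_def by (simp add: Abs_q8_inverse)

lemma qmk_eq_iff: "qmk a b = qmk c d \<longleftrightarrow> a mod 4 = c mod 4 \<and> b mod 2 = d mod 2"
  by (metis Rep_q8_qmk Rep_q8_inject prod.inject)

lemma q8_qmk_exhaust: obtains a b where "x = qmk a b" "a < 4" "b < 2"
proof -
  obtain a b where "Rep_q8 x = (a, b)" "a < 4" "b < 2" using Rep_q8[of x] by auto
  then show ?thesis using that by (metis Rep_q8_qmk Rep_q8_inject mod_less)
qed

lemma UNIV_q8: "(UNIV :: q8 set) = {qmk 0 0, qmk 1 0, qmk 2 0, qmk 3 0, qmk 0 1, qmk 1 1, qmk 2 1, qmk 3 1}"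
proof -
  have "x \<in> {qmk 0 0, qmk 1 0, qmk 2 0, qmk 3 0, qmk 0 1, qmk 1 1, qmk 2 1, qmk 3 1}" for x
    by (rule q8_qmk_exhaust[of x]) (auto simp: less_Suc_eq numeral_eq_Suc One_nat_def)
  then show ?thesis by auto
qed

declare qmk_eq_iff [simp]

lemma q8_exhaust:
  obtains "x = qmk 0 0" | "x = qmk 1 0" | "x = qmk 2 0" | "x = qmk 3 0"
    | "x = qmk 0 1" | "x = qmk 1 1" | "x = qmk 2 1" | "x = qmk 3 1"
  using UNIV_I[of x] unfolding UNIV_q8 by blast

lemma q8_all: "(\<forall>x::q8. P x) \<longleftrightarrow> P (qmk 0 0) \<and> P (qmk 1 0) \<and> P (qmk 2 0) \<and> P (qmk 3 0)
    \<and> P (qmk 0 1) \<and> P (qmk 1 1) \<and> P (qmk 2 1) \<and> P (qmk 3 1)"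
  by (metis UNIV_I UNIV_q8 insert_iff singletonD)

lemma q8_ex: "(\<exists>x::q8. P x) \<longleftrightarrow> P (qmk 0 0) \<or> P (qmk 1 0) \<or> P (qmk 2 0) \<or> P (qmk 3 0)
    \<or> P (qmk 0 1) \<or> P (qmk 1 1) \<or> P (qmk 2 1) \<or> P (qmk 3 1)"
  using q8_all[of "\<lambda>x. \<not> P x"] by blast

lemma sum_q8: "(\<Sum>x\<in>UNIV. f x) = f (qmk 0 0) + f (qmk 1 0) + f (qmk 2 0) + f (qmk 3 0)
    + f (qmk 0 1) + f (qmk 1 1) + f (qmk 2 1) + f (qmk 3 1)"
  unfolding UNIV_q8 by (simp add: add.assoc)

lemma q8_generators: "qe = qmk 0 0" "qr = qmk 1 0" "qs = qmk 0 1"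
  by (simp_all add: qe_def qr_def qs_def)

lemma qmul_qmk: "qmul (qmk a b) (qmk c d) =
    qmk (a mod 4 + (if b mod 2 = 0 then c mod 4 else 4 - c mod 4) + (if b mod 2 = 1 \<and> d mod 2 = 1 then 2 else 0))
      (b mod 2 + d mod 2)"
  unfolding qmul_def by simp

lemma qmul_table [simp]:
  "qmul (qmk 0 0) (qmk 0 0) = qmk 0 0" "qmul (qmk 0 0) (qmk 1 0) = qmk 1 0"
  "qmul (qmk 0 0) (qmk 2 0) = qmk 2 0" "qmul (qmk 0 0) (qmk 3 0) = qmk 3 0"
  "qmul (qmk 0 0) (qmk 0 1) = qmk 0 1" "qmul (qmk 0 0) (qmk 1 1) = qmk 1 1"
  "qmul (qmk 0 0) (qmk 2 1) = qmk 2 1" "qmul (qmk 0 0) (qmk 3 1) = qmk 3 1"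
  "qmul (qmk 1 0) (qmk 0 0) = qmk 1 0" "qmul (qmk 1 0) (qmk 1 0) = qmk 2 0"
  "qmul (qmk 1 0) (qmk 2 0) = qmk 3 0" "qmul (qmk 1 0) (qmk 3 0) = qmk 0 0"
  "qmul (qmk 1 0) (qmk 0 1) = qmk 1 1" "qmul (qmk 1 0) (qmk 1 1) = qmk 2 1"
  "qmul (qmk 1 0) (qmk 2 1) = qmk 3 1" "qmul (qmk 1 0) (qmk 3 1) = qmk 0 1"
  "qmul (qmk 2 0) (qmk 0 0) = qmk 2 0" "qmul (qmk 2 0) (qmk 1 0) = qmk 3 0"
  "qmul (qmk 2 0) (qmk 2 0) = qmk 0 0" "qmul (qmk 2 0) (qmk 3 0) = qmk 1 0"
  "qmul (qmk 2 0) (qmk 0 1) = qmk 2 1" "qmul (qmk 2 0) (qmk 1 1) = qmk 3 1"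
  "qmul (qmk 2 0) (qmk 2 1) = qmk 0 1" "qmul (qmk 2 0) (qmk 3 1) = qmk 1 1"
  "qmul (qmk 3 0) (qmk 0 0) = qmk 3 0" "qmul (qmk 3 0) (qmk 1 0) = qmk 0 0"
  "qmul (qmk 3 0) (qmk 2 0) = qmk 1 0" "qmul (qmk 3 0) (qmk 3 0) = qmk 2 0"
  "qmul (qmk 3 0) (qmk 0 1) = qmk 3 1" "qmul (qmk 3 0) (qmk 1 1) = qmk 0 1"
  "qmul (qmk 3 0) (qmk 2 1) = qmk 1 1" "qmul (qmk 3 0) (qmk 3 1) = qmk 2 1"
  "qmul (qmk 0 1) (qmk 0 0) = qmk 0 1" "qmul (qmk 0 1) (qmk 1 0) = qmk 3 1"
  "qmul (qmk 0 1) (qmk 2 0) = qmk 2 1" "qmul (qmk 0 1) (qmk 3 0) = qmk 1 1"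
  "qmul (qmk 0 1) (qmk 0 1) = qmk 2 0" "qmul (qmk 0 1) (qmk 1 1) = qmk 1 0"
  "qmul (qmk 0 1) (qmk 2 1) = qmk 0 0" "qmul (qmk 0 1) (qmk 3 1) = qmk 3 0"
  "qmul (qmk 1 1) (qmk 0 0) = qmk 1 1" "qmul (qmk 1 1) (qmk 1 0) = qmk 0 1"
  "qmul (qmk 1 1) (qmk 2 0) = qmk 3 1" "qmul (qmk 1 1) (qmk 3 0) = qmk 2 1"
  "qmul (qmk 1 1) (qmk 0 1) = qmk 3 0" "qmul (qmk 1 1) (qmk 1 1) = qmk 2 0"
  "qmul (qmk 1 1) (qmk 2 1) = qmk 1 0" "qmul (qmk 1 1) (qmk 3 1) = qmk 0 0"
  "qmul (qmk 2 1) (qmk 0 0) = qmk 2 1" "qmul (qmk 2 1) (qmk 1 0) = qmk 1 1"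
  "qmul (qmk 2 1) (qmk 2 0) = qmk 0 1" "qmul (qmk 2 1) (qmk 3 0) = qmk 3 1"
  "qmul (qmk 2 1) (qmk 0 1) = qmk 0 0" "qmul (qmk 2 1) (qmk 1 1) = qmk 3 0"
  "qmul (qmk 2 1) (qmk 2 1) = qmk 2 0" "qmul (qmk 2 1) (qmk 3 1) = qmk 1 0"
  "qmul (qmk 3 1) (qmk 0 0) = qmk 3 1" "qmul (qmk 3 1) (qmk 1 0) = qmk 2 1"
  "qmul (qmk 3 1) (qmk 2 0) = qmk 1 1" "qmul (qmk 3 1) (qmk 3 0) = qmk 0 1"
  "qmul (qmk 3 1) (qmk 0 1) = qmk 1 0" "qmul (qmk 3 1) (qmk 1 1) = qmk 0 0"
  "qmul (qmk 3 1) (qmk 2 1) = qmk 3 0" "qmul (qmk 3 1) (qmk 3 1) = qmk 2 0"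
  by (simp_all add: qmul_qmk)

lemma qinv_table [simp]:
  "qinv (qmk 0 0) = qmk 0 0" "qinv (qmk 1 0) = qmk 3 0" "qinv (qmk 2 0) = qmk 2 0" "qinv (qmk 3 0) = qmk 1 0"
  "qinv (qmk 0 1) = qmk 2 1" "qinv (qmk 1 1) = qmk 3 1" "qinv (qmk 2 1) = qmk 0 1" "qinv (qmk 3 1) = qmk 1 1"
  by (simp_all add: qinv_def)

interpretation q8: group qmul qe qinv
proof
  show "qmul (qmul x y) z = qmul x (qmul y z)" for x y z
    by (cases x rule: q8_exhaust; cases y rule: q8_exhaust; cases z rule: q8_exhaust) simp_all
  show "qmul qe x = x" for x
    by (cases x rule: q8_exhaust) (simp_all add: q8_generators)
  show "qmul (qinv x) x = qe" for x
    by (cases x rule: q8_exhaust) (simp_all add: q8_generators)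
qed

lemma qmul_qinv_cancel: "qmul x (qmul (qinv x) y) = y" "qmul (qinv x) (qmul x y) = y"
  by (simp_all flip: q8.assoc)

lemma qconj_eq_iff: "g = qmul (qmul h g') (qinv h) \<longleftrightarrow> g' = qmul (qmul (qinv h) g) h"
  by (auto simp: q8.assoc qmul_qinv_cancel)

lemma qconj_qmul:
  "qmul (qmul (qmul (qinv h) x) h) (qmul (qmul (qinv h) y) h) = qmul (qmul (qinv h) (qmul x y)) h"
  by (simp add: q8.assoc qmul_qinv_cancel)

lemma qconj_fixed_iff: "qmul (qmul k g) (qinv k) = g \<longleftrightarrow> qmul k g = qmul g k"
  by (metis q8.assoc q8.left_inverse q8.right_neutral qmul_qinv_cancel(1))

lemma qconj_eq_iff_of_commute: "qmul k g0 = qmul g0 k \<Longrightarrow> g0 = qmul (qmul k g) (qinv k) \<longleftrightarrow> g = g0"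
  by (metis q8.assoc q8.left_inverse q8.left_neutral qconj_eq_iff)

lemma qinv_commute_iff: "qmul (qinv k) g = qmul g (qinv k) \<longleftrightarrow> qmul k g = qmul g k"
  by (cases k rule: q8_exhaust; cases g rule: q8_exhaust) simp_all

lemma sum_qconj_delta:
  "(\<Sum>g'\<in>UNIV. if g = qmul (qmul h g') (qinv h) then f g' else 0 :: 'a :: comm_monoid_add)
     = f (qmul (qmul (qinv h) g) h)"
  unfolding qconj_eq_iff by simp

lemma sum_qmul_left: "(\<Sum>z\<in>UNIV. f (qmul w z)) = (\<Sum>z\<in>UNIV. f z :: 'a :: comm_monoid_add)"
  by (rule sum.reindex_bij_witness[where i="qmul (qinv w)" and j="qmul w"])
    (simp_all add: qmul_qinv_cancel)

lemma sum_qmul_right: "(\<Sum>z\<in>UNIV. f (qmul z w)) = (\<Sum>z\<in>UNIV. f z :: 'a :: comm_monoid_add)"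
  by (rule sum.reindex_bij_witness[where i="\<lambda>z. qmul z (qinv w)" and j="\<lambda>z. qmul z w"])
    (simp_all add: q8.assoc)

section \<open>The module \<open>V\<close> and its tensor powers\<close>

declare Vgr.simps [simp del]

lemma Vgr_qmk [simp]:
  "Vgr U17 = qmk 0 1" "Vgr V17 = qmk 2 1" "Vgr U20 = qmk 3 1"
  "Vgr V20 = qmk 1 1" "Vgr U21 = qmk 3 1" "Vgr V21 = qmk 1 1"
proof -
  have "qpow x 2 = qmul x (qmul x qe)" "qpow x 3 = qmul x (qmul x (qmul x qe))" for x
    by (simp_all add: qpow_def numeral_2_eq_2 numeral_3_eq_3)
  then show "Vgr U17 = qmk 0 1" "Vgr V17 = qmk 2 1" "Vgr U20 = qmk 3 1"
    "Vgr V20 = qmk 1 1" "Vgr U21 = qmk 3 1" "Vgr V21 = qmk 1 1"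
    by (simp_all add: Vgr.simps q8_generators)
qed

lemma UNIV_vb: "(UNIV :: vb set) = {U17, V17, U20, V20, U21, V21}"
  using vb.exhaust by auto

lemma sum_vb: "(\<Sum>x\<in>UNIV. f x) = f U17 + f V17 + f U20 + f V20 + f U21 + f V21"
  unfolding UNIV_vb by (simp add: add.assoc)

lemma mmul_mid: "mmul mid M = M" "mmul M mid = M"
  by (auto intro!: ext simp: mmul_def mid_def if_distrib if_distribR cong: if_cong)

lemma VA_qmk_step:
  "VA (qmk 0 0) = mid" "VA (qmk 1 0) = VR" "VA (qmk 0 1) = VS"
  "VA (qmk 2 0) = mmul (VA (qmk 1 0)) VR" "VA (qmk 3 0) = mmul (VA (qmk 2 0)) VR"
  "VA (qmk 1 1) = mmul (VA (qmk 1 0)) VS" "VA (qmk 2 1) = mmul (VA (qmk 2 0)) VS"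
  "VA (qmk 3 1) = mmul (VA (qmk 3 0)) VS"
proof -
  have pow: "mpow M 0 = mid" "mpow M 1 = M" "mpow M 2 = mmul M M" "mpow M 3 = mmul (mmul M M) M" for M
    by (simp_all add: mpow_def numeral_eq_Suc One_nat_def mmul_mid)
  have "VA (qmk a b) = mmul (mpow VR a) (mpow VS b)" if "a < 4" "b < 2" for a b
    using that by (simp add: VA_def)
  then show "VA (qmk 0 0) = mid" "VA (qmk 1 0) = VR" "VA (qmk 0 1) = VS"
    "VA (qmk 2 0) = mmul (VA (qmk 1 0)) VR" "VA (qmk 3 0) = mmul (VA (qmk 2 0)) VR"
    "VA (qmk 1 1) = mmul (VA (qmk 1 0)) VS" "VA (qmk 2 1) = mmul (VA (qmk 2 0)) VS"
    "VA (qmk 3 1) = mmul (VA (qmk 3 0)) VS"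
    by (simp_all add: pow mmul_mid)
qed

lemma VA_qmk_2_0:
  "VA (qmk 2 0) = (\<lambda>i j. case (i, j) of
      (U17, U17) \<Rightarrow> -1 | (V17, V17) \<Rightarrow> -1
    | (U20, U20) \<Rightarrow> 1 | (V20, V20) \<Rightarrow> 1
    | (U21, U21) \<Rightarrow> -1 | (V21, V21) \<Rightarrow> -1 | _ \<Rightarrow> 0)"
  unfolding VA_qmk_step by (rule ext)+ (simp add: mmul_def sum_vb split: vb.split)

lemma VA_qmk_3_0:
  "VA (qmk 3 0) = (\<lambda>i j. case (i, j) of
      (U17, V17) \<Rightarrow> -1 | (V17, U17) \<Rightarrow> 1
    | (U20, V20) \<Rightarrow> -1 | (V20, U20) \<Rightarrow> -1
    | (U21, V21) \<Rightarrow> \<i> | (V21, U21) \<Rightarrow> \<i> | _ \<Rightarrow> 0)"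
  unfolding VA_qmk_step VA_qmk_2_0 by (rule ext)+ (simp add: mmul_def sum_vb split: vb.split)

lemma VA_qmk_1_1:
  "VA (qmk 1 1) = (\<lambda>i j. case (i, j) of
      (U17, V17) \<Rightarrow> \<i> | (V17, U17) \<Rightarrow> \<i>
    | (U20, U20) \<Rightarrow> -1 | (V20, V20) \<Rightarrow> -1
    | (U21, U21) \<Rightarrow> \<i> | (V21, V21) \<Rightarrow> - \<i> | _ \<Rightarrow> 0)"
  unfolding VA_qmk_step by (rule ext)+ (simp add: mmul_def sum_vb split: vb.split)

lemma VA_qmk_2_1:
  "VA (qmk 2 1) = (\<lambda>i j. case (i, j) of
      (U17, U17) \<Rightarrow> \<i> | (V17, V17) \<Rightarrow> - \<i>
    | (U20, V20) \<Rightarrow> 1 | (V20, U20) \<Rightarrow> 1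
    | (U21, V21) \<Rightarrow> -1 | (V21, U21) \<Rightarrow> 1 | _ \<Rightarrow> 0)"
  unfolding VA_qmk_step VA_qmk_2_0 by (rule ext)+ (simp add: mmul_def sum_vb split: vb.split)

lemma VA_qmk_3_1:
  "VA (qmk 3 1) = (\<lambda>i j. case (i, j) of
      (U17, V17) \<Rightarrow> - \<i> | (V17, U17) \<Rightarrow> - \<i>
    | (U20, U20) \<Rightarrow> -1 | (V20, V20) \<Rightarrow> -1
    | (U21, U21) \<Rightarrow> - \<i> | (V21, V21) \<Rightarrow> \<i> | _ \<Rightarrow> 0)"
  unfolding VA_qmk_step VA_qmk_3_0 by (rule ext)+ (simp add: mmul_def sum_vb split: vb.split)

lemmas VA_qmk [simp] = VA_qmk_step(1-3) VA_qmk_2_0 VA_qmk_3_0 VA_qmk_1_1 VA_qmk_2_1 VA_qmk_3_1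

lemma VA_qe: "VA qe = mid"
  by (simp add: q8_generators)

lemma VA_qmul: "VA (qmul h h') i k = (\<Sum>j\<in>UNIV. VA h i j * VA h' j k)"
  by (cases h rule: q8_exhaust; cases h' rule: q8_exhaust; cases i; cases k) (simp_all add: sum_vb mid_def)

lemma VA_nonzero_grade: "VA h b c \<noteq> 0 \<Longrightarrow> Vgr c = qmul (qmul (qinv h) (Vgr b)) h"
  by (cases h rule: q8_exhaust; cases b; cases c) (simp_all add: mid_def)

abbreviation tensor_basis :: "nat \<Rightarrow> vb list set" where
  "tensor_basis m \<equiv> {bs. length bs = m}"

lemma finite_tensor_basis: "finite (tensor_basis m)"
  using finite_lists_length_eq[of "UNIV :: vb set" m] by simp

lemma tensor_basis_Suc: "tensor_basis (Suc m) = (\<lambda>(b, bs). b # bs) ` (UNIV \<times> tensor_basis m)"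
  by (auto simp: image_iff length_Suc_conv)

lemma sum_tensor_basis_Suc:
  "(\<Sum>xs\<in>tensor_basis (Suc m). f xs) = (\<Sum>b\<in>UNIV. \<Sum>bs\<in>tensor_basis m. f (b # bs) :: complex)"
proof -
  have "inj_on (\<lambda>(b, bs). b # bs) (UNIV \<times> tensor_basis m)"
    by (auto simp: inj_on_def)
  from sum.reindex[OF this, of f]
  have "(\<Sum>xs\<in>tensor_basis (Suc m). f xs) = (\<Sum>(b, bs)\<in>UNIV \<times> tensor_basis m. f (b # bs))"
    unfolding tensor_basis_Suc by (simp add: comp_def case_prod_unfold)
  then show ?thesis
    by (simp add: sum.cartesian_product)
qed

lemma tA_nonzero_grade: "tA h i j \<noteq> 0 \<Longrightarrow> tgr j = qmul (qmul (qinv h) (tgr i)) h"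
  by (induction h i j rule: tA.induct) (auto dest: VA_nonzero_grade simp: qconj_qmul)

lemma tA_qe: "length i = length k \<Longrightarrow> tA qe i k = (if i = k then 1 else 0)"
proof (induction i arbitrary: k)
  case (Cons a i)
  then obtain b k' where "k = b # k'" by (cases k) auto
  then show ?case using Cons by (simp add: VA_qe mid_def)
qed simp

lemma tA_qmul:
  "length i = m \<Longrightarrow> length k = m \<Longrightarrow> (\<Sum>j\<in>tensor_basis m. tA h i j * tA h' j k) = tA (qmul h h') i k"
proof (induction m arbitrary: i k)
  case (Suc m)
  then obtain a i' b k' where ik: "i = a # i'" "k = b # k'" "length i' = m" "length k' = m"
    by (auto simp: length_Suc_conv)
  have "(\<Sum>j\<in>tensor_basis (Suc m). tA h i j * tA h' j k)
      = (\<Sum>c\<in>UNIV. VA h a c * VA h' c b) * (\<Sum>cs\<in>tensor_basis m. tA h i' cs * tA h' cs k')"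
    unfolding sum_tensor_basis_Suc sum_product ik by (simp add: ac_simps)
  then show ?case
    using Suc.IH ik by (simp add: VA_qmul)
qed simp

lemma is_module_tensor_power: "is_module (tensor_basis m) (grmod tgr tA)"
  unfolding is_module_def
proof (intro conjI allI ballI)
  fix g h g' h' i k assume i: "i \<in> tensor_basis m" and k: "k \<in> tensor_basis m"
  let ?P = "tgr i = g \<and> g' = qmul (qmul (qinv h) g) h"
  have "(\<Sum>j\<in>tensor_basis m. grmod tgr tA g h i j * grmod tgr tA g' h' j k)
      = (\<Sum>j\<in>tensor_basis m. if ?P then tA h i j * tA h' j k else 0)"
    by (rule sum.cong) (use tA_nonzero_grade[of h i] in \<open>auto simp: grmod_def\<close>)
  also have "\<dots> = (if ?P then tA (qmul h h') i k else 0)"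
    by (cases ?P) (use tA_qmul[of i m k h h'] i k in auto)
  finally show "(\<Sum>j\<in>tensor_basis m. grmod tgr tA g h i j * grmod tgr tA g' h' j k) =
      (if g = qmul (qmul h g') (qinv h) then grmod tgr tA g (qmul h h') i k else 0)"
    by (auto simp: grmod_def qconj_eq_iff)
next
  fix i k assume "i \<in> tensor_basis m" "k \<in> tensor_basis m"
  then show "(\<Sum>g\<in>UNIV. grmod tgr tA g qe i k) = (if i = k then 1 else 0)"
    by (simp add: grmod_def tA_qe)
qed

section \<open>Modules over \<open>D(Q\<^sub>8)\<close> given on a basis\<close>

lemma mult_delta [simp]:
  "(if P then 1 else 0) * (y :: complex) = (if P then y else 0)"
  "y * (if P then 1 else 0) = (if P then y else 0)"
  by simp_all

definition vecmat :: "'a set \<Rightarrow> 'c set \<Rightarrow> ('a \<Rightarrow> complex) \<Rightarrow> ('a \<Rightarrow> 'c \<Rightarrow> complex) \<Rightarrow> 'c \<Rightarrow> complex" where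
  "vecmat A C v M = (\<lambda>k. if k \<in> C then \<Sum>i\<in>A. v i * M i k else 0)"

definition unit_vec :: "'a \<Rightarrow> 'a \<Rightarrow> complex" where
  "unit_vec i = (\<lambda>j. if j = i then 1 else 0)"

lemma vecmat_in_Vec [simp]: "vecmat A C v M \<in> Vec C"
  by (simp add: vecmat_def Vec_def)

lemma vecmat_vecmat: "vecmat B C (vecmat A B v M) N = vecmat A C v (\<lambda>i k. \<Sum>j\<in>B. M i j * N j k)"
proof (rule ext)
  fix k
  have "(\<Sum>j\<in>B. vecmat A B v M j * N j k) = (\<Sum>j\<in>B. \<Sum>i\<in>A. v i * M i j * N j k)"
    by (rule sum.cong) (auto simp: vecmat_def sum_distrib_right)
  also have "\<dots> = (\<Sum>i\<in>A. v i * (\<Sum>j\<in>B. M i j * N j k))"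
    by (subst sum.swap) (simp add: sum_distrib_left mult.assoc)
  finally show "vecmat B C (vecmat A B v M) N k = vecmat A C v (\<lambda>i k. \<Sum>j\<in>B. M i j * N j k) k"
    by (simp add: vecmat_def)
qed

lemma vecmat_cong:
  "(\<And>i k. i \<in> A \<Longrightarrow> k \<in> C \<Longrightarrow> M i k = M' i k) \<Longrightarrow> (\<And>i. i \<in> A \<Longrightarrow> v i = v' i)
    \<Longrightarrow> vecmat A C v M = vecmat A C v' M'"
  unfolding vecmat_def by (intro ext) (auto intro!: sum.cong)

lemma vecmat_sum: "vecmat A C (\<lambda>i. \<Sum>l\<in>L. a l * f l i) M = (\<lambda>k. \<Sum>l\<in>L. a l * vecmat A C (f l) M k)"
proof (rule ext)
  fix k
  have "(\<Sum>i\<in>A. (\<Sum>l\<in>L. a l * f l i) * M i k) = (\<Sum>l\<in>L. a l * (\<Sum>i\<in>A. f l i * M i k))"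
    by (simp add: sum_distrib_left sum_distrib_right mult.assoc) (rule sum.swap)
  then show "vecmat A C (\<lambda>i. \<Sum>l\<in>L. a l * f l i) M k = (\<Sum>l\<in>L. a l * vecmat A C (f l) M k)"
    by (simp add: vecmat_def)
qed

lemma vecmat_add: "vecmat A C (\<lambda>i. a * v i + w i) M = (\<lambda>k. a * vecmat A C v M k + vecmat A C w M k)"
  unfolding vecmat_def by (intro ext) (simp add: sum.distrib sum_distrib_left algebra_simps)

lemma vecmat_zero [simp]: "vecmat A C (\<lambda>_. 0) M = (\<lambda>_. 0)"
  unfolding vecmat_def by auto

lemma vecmat_unit_vec: "finite A \<Longrightarrow> i \<in> A \<Longrightarrow> vecmat A C (unit_vec i) M = (\<lambda>k. if k \<in> C then M i k else 0)"
  unfolding vecmat_def unit_vec_def by (intro ext) simp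

lemma Vec_sum_unit_vec: "finite A \<Longrightarrow> v \<in> Vec A \<Longrightarrow> v = (\<lambda>j. \<Sum>i\<in>A. v i * unit_vec i j)"
  by (intro ext) (auto simp: unit_vec_def Vec_def)

text \<open>The action of the group element h (the element \<open>\<Sum>\<^sub>g \<phi>\<^sub>g h\<close> of D(G)) and of the
  grade projection \<open>\<phi>\<^sub>g\<close>.\<close>

definition gmat :: "'b dact \<Rightarrow> q8 \<Rightarrow> 'b \<Rightarrow> 'b \<Rightarrow> complex" where
  "gmat act h i j = (\<Sum>g\<in>UNIV. act g h i j)"

definition gact :: "'b set \<Rightarrow> 'b dact \<Rightarrow> q8 \<Rightarrow> ('b \<Rightarrow> complex) \<Rightarrow> 'b \<Rightarrow> complex" where
  "gact B act h v = vecmat B B v (gmat act h)"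

definition gproj :: "'b set \<Rightarrow> 'b dact \<Rightarrow> q8 \<Rightarrow> ('b \<Rightarrow> complex) \<Rightarrow> 'b \<Rightarrow> complex" where
  "gproj B act g v = vecmat B B v (act g qe)"

lemma gact_in_Vec [simp]: "gact B act h v \<in> Vec B"
  by (simp add: gact_def)

lemma gproj_in_Vec [simp]: "gproj B act g v \<in> Vec B"
  by (simp add: gproj_def)

lemma gact_outside: "j \<notin> B \<Longrightarrow> gact B act h v j = 0"
  by (simp add: gact_def vecmat_def)

lemma gact_sum: "gact B act h (\<lambda>i. \<Sum>l\<in>L. a l * f l i) = (\<lambda>k. \<Sum>l\<in>L. a l * gact B act h (f l) k)"
  unfolding gact_def by (rule vecmat_sum)

lemma gproj_sum: "gproj B act g (\<lambda>i. \<Sum>l\<in>L. a l * f l i) = (\<lambda>k. \<Sum>l\<in>L. a l * gproj B act g (f l) k)"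
  unfolding gproj_def by (rule vecmat_sum)

lemma gact_add: "gact B act h (\<lambda>i. a * x i + y i) = (\<lambda>k. a * gact B act h x k + gact B act h y k)"
  unfolding gact_def by (rule vecmat_add)

lemma gproj_add: "gproj B act h (\<lambda>i. a * x i + y i) = (\<lambda>k. a * gproj B act h x k + gproj B act h y k)"
  unfolding gproj_def by (rule vecmat_add)

lemma gact_zero [simp]: "gact B act h (\<lambda>_. 0) = (\<lambda>_. 0)"
  by (simp add: gact_def)

context
  fixes B :: "'b set" and act :: "'b dact"
  assumes fin: "finite B" and mod: "is_module B act"
begin

lemma act_mult: "i \<in> B \<Longrightarrow> k \<in> B \<Longrightarrow> (\<Sum>j\<in>B. act g h i j * act g' h' j k)
    = (if g = qmul (qmul h g') (qinv h) then act g (qmul h h') i k else 0)"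
  using mod unfolding is_module_def by blast

lemma act_unit: "i \<in> B \<Longrightarrow> k \<in> B \<Longrightarrow> (\<Sum>g\<in>UNIV. act g qe i k) = (if i = k then 1 else 0)"
  using mod unfolding is_module_def by blast

lemma act_factor: "i \<in> B \<Longrightarrow> k \<in> B \<Longrightarrow> (\<Sum>j\<in>B. act g qe i j * gmat act h j k) = act g h i k"
proof -
  assume ik: "i \<in> B" "k \<in> B"
  have "(\<Sum>j\<in>B. act g qe i j * gmat act h j k) = (\<Sum>g'\<in>UNIV. \<Sum>j\<in>B. act g qe i j * act g' h j k)"
    by (simp add: gmat_def sum_distrib_left) (rule sum.swap)
  also have "\<dots> = (\<Sum>g'\<in>UNIV. if g = g' then act g h i k else 0)"
    by (rule sum.cong) (simp_all add: act_mult[OF ik])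
  finally show ?thesis by simp
qed

lemma vact_eq_gact_gproj: "vact B act g h v = gact B act h (gproj B act g v)"
proof -
  have "vact B act g h v = vecmat B B v (act g h)"
    by (simp add: vact_def vecmat_def)
  also have "\<dots> = vecmat B B v (\<lambda>i k. \<Sum>j\<in>B. act g qe i j * gmat act h j k)"
    by (rule vecmat_cong) (simp_all add: act_factor)
  finally show ?thesis
    by (simp add: gact_def gproj_def vecmat_vecmat)
qed

lemma gmat_qmul: "i \<in> B \<Longrightarrow> k \<in> B \<Longrightarrow> (\<Sum>j\<in>B. gmat act h i j * gmat act h' j k) = gmat act (qmul h h') i k"
proof -
  assume ik: "i \<in> B" "k \<in> B"
  have "(\<Sum>j\<in>B. gmat act h i j * gmat act h' j k) = (\<Sum>j\<in>B. \<Sum>g\<in>UNIV. \<Sum>g'\<in>UNIV. act g h i j * act g' h' j k)"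
    by (simp add: gmat_def sum_product)
  also have "\<dots> = (\<Sum>g\<in>UNIV. \<Sum>g'\<in>UNIV. \<Sum>j\<in>B. act g h i j * act g' h' j k)"
    by (subst sum.swap) (subst (2) sum.swap, rule refl)
  also have "\<dots> = (\<Sum>g\<in>UNIV. \<Sum>g'\<in>UNIV. if g = qmul (qmul h g') (qinv h) then act g (qmul h h') i k else 0)"
    by (simp add: act_mult[OF ik])
  also have "\<dots> = gmat act (qmul h h') i k"
    by (simp only: sum_qconj_delta gmat_def)
  finally show ?thesis .
qed

lemma gact_gact: "gact B act h' (gact B act h v) = gact B act (qmul h h') v"
  unfolding gact_def vecmat_vecmat by (rule vecmat_cong) (simp_all add: gmat_qmul)

lemma gact_qe: "v \<in> Vec B \<Longrightarrow> gact B act qe v = v"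
proof -
  assume v: "v \<in> Vec B"
  have "gact B act qe v = vecmat B B v (\<lambda>i k. if i = k then 1 else 0)"
    unfolding gact_def by (rule vecmat_cong) (simp_all add: gmat_def act_unit)
  also have "\<dots> = v"
    using v fin by (intro ext) (auto simp: vecmat_def Vec_def)
  finally show ?thesis .
qed

lemma gact_qinv_gact: "v \<in> Vec B \<Longrightarrow> gact B act (qinv h) (gact B act h v) = v"
  by (simp add: gact_gact gact_qe)

lemma gproj_gproj: "gproj B act g' (gproj B act g v) = (if g = g' then gproj B act g v else (\<lambda>_. 0))"
proof -
  have "gproj B act g' (gproj B act g v) = vecmat B B v (\<lambda>i k. if g = g' then act g qe i k else 0)"
    unfolding gproj_def vecmat_vecmat by (rule vecmat_cong) (simp_all add: act_mult)
  then show ?thesis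
    by (auto simp: gproj_def vecmat_def)
qed

lemma sum_gproj: "v \<in> Vec B \<Longrightarrow> (\<lambda>j. \<Sum>g\<in>UNIV. gproj B act g v j) = v"
proof -
  assume v: "v \<in> Vec B"
  have "(\<lambda>j. \<Sum>g\<in>UNIV. gproj B act g v j) = vecmat B B v (gmat act qe)"
    unfolding gproj_def gmat_def vecmat_def by (auto simp: sum_distrib_left intro!: sum.swap)
  also have "\<dots> = v"
    using gact_qe[OF v] by (simp add: gact_def)
  finally show ?thesis .
qed

lemma gproj_gact: "gproj B act g (gact B act h v) = gact B act h (gproj B act (qmul (qmul h g) (qinv h)) v)"
proof -
  have "(\<Sum>j\<in>B. gmat act h i j * act g qe j k) = (\<Sum>j\<in>B. act (qmul (qmul h g) (qinv h)) qe i j * gmat act h j k)"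
    if ik: "i \<in> B" "k \<in> B" for i k
  proof -
    have "(\<Sum>j\<in>B. gmat act h i j * act g qe j k) = (\<Sum>g1\<in>UNIV. \<Sum>j\<in>B. act g1 h i j * act g qe j k)"
      unfolding gmat_def by (simp add: sum_distrib_right) (rule sum.swap)
    also have "\<dots> = act (qmul (qmul h g) (qinv h)) h i k"
      by (simp add: act_mult[OF ik])
    finally show ?thesis
      by (simp add: act_factor[OF ik])
  qed
  then show ?thesis
    unfolding gproj_def gact_def vecmat_vecmat by (intro vecmat_cong) simp_all
qed

end

section \<open>Projections onto centraliser idempotents\<close>

text \<open>Read \<open>c\<close> as the element \<open>\<Sum>\<^sub>z c(z) z\<close> of the group algebra of the centraliser of \<open>g\<^sub>0\<close>.
  Then \<open>cent_proj\<close> applies \<open>\<phi>\<^sub>g\<^sub>0 c\<close>, and the last clause of \<open>centralizer_idempotent\<close> says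
  \<open>c k c = \<tau>(k) c\<close> for all \<open>k\<close> in the centraliser, with \<open>\<tau>(k) = c(k\<^sup>-\<^sup>1) / c(1)\<close>: so \<open>c\<close> is a
  primitive idempotent, the scalar being forced by the trace \<open>a \<mapsto> a(1)\<close>.\<close>

definition cent_proj :: "'b set \<Rightarrow> 'b dact \<Rightarrow> q8 \<Rightarrow> (q8 \<Rightarrow> complex) \<Rightarrow> ('b \<Rightarrow> complex) \<Rightarrow> 'b \<Rightarrow> complex" where
  "cent_proj B act g0 c v = (\<lambda>j. \<Sum>z\<in>UNIV. c z * gact B act z (gproj B act g0 v) j)"

definition centralizer_idempotent :: "q8 \<Rightarrow> (q8 \<Rightarrow> complex) \<Rightarrow> bool" where
  "centralizer_idempotent g0 c \<longleftrightarrow>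
     (\<forall>z. c z \<noteq> 0 \<longrightarrow> qmul z g0 = qmul g0 z) \<and> c qe \<noteq> 0 \<and>
     (\<forall>k y. qmul k g0 = qmul g0 k \<longrightarrow>
        (\<Sum>z\<in>UNIV. c z * c (qmul (qinv (qmul z k)) y)) = c (qinv k) / c qe * c y)"

lemma cent_proj_in_Vec [simp]: "cent_proj B act g0 c v \<in> Vec B"
  by (simp add: cent_proj_def Vec_def gact_outside)

lemma cent_proj_sum:
  "cent_proj B act g0 c (\<lambda>i. \<Sum>l\<in>L. a l * f l i) = (\<lambda>j. \<Sum>l\<in>L. a l * cent_proj B act g0 c (f l) j)"
proof (rule ext)
  fix j
  have "cent_proj B act g0 c (\<lambda>i. \<Sum>l\<in>L. a l * f l i) j
      = (\<Sum>z\<in>UNIV. \<Sum>l\<in>L. a l * (c z * gact B act z (gproj B act g0 (f l)) j))"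
    unfolding cent_proj_def gproj_sum gact_sum by (simp add: sum_distrib_left algebra_simps)
  also have "\<dots> = (\<Sum>l\<in>L. a l * cent_proj B act g0 c (f l) j)"
    by (subst sum.swap) (simp add: cent_proj_def sum_distrib_left)
  finally show "cent_proj B act g0 c (\<lambda>i. \<Sum>l\<in>L. a l * f l i) j = (\<Sum>l\<in>L. a l * cent_proj B act g0 c (f l) j)" .
qed

lemma cent_proj_add:
  "cent_proj B act g0 c (\<lambda>i. a * x i + y i) = (\<lambda>k. a * cent_proj B act g0 c x k + cent_proj B act g0 c y k)"
  unfolding cent_proj_def gproj_add gact_add by (simp add: sum.distrib sum_distrib_left algebra_simps)

context
  fixes B :: "'b set" and act :: "'b dact" and g0 :: q8 and c :: "q8 \<Rightarrow> complex"
  assumes fin: "finite B" and mod: "is_module B act"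
    and supp: "\<forall>z. c z \<noteq> 0 \<longrightarrow> qmul z g0 = qmul g0 z"
begin

lemma cent_proj_gproj:
  "cent_proj B act g0 c (gproj B act g v) = (if g = g0 then cent_proj B act g0 c v else (\<lambda>_. 0))"
  unfolding cent_proj_def gproj_gproj[OF fin mod] by (auto simp: cent_proj_def)

lemma gproj_cent_proj:
  "gproj B act g (cent_proj B act g0 c v) = (if g = g0 then cent_proj B act g0 c v else (\<lambda>_. 0))"
proof -
  have "c z * gproj B act g (gact B act z (gproj B act g0 v)) k
      = (if g = g0 then c z * gact B act z (gproj B act g0 v) k else 0)" for z k
  proof (cases "c z = 0")
    case False
    then have "qmul z g0 = qmul g0 z"
      using supp by blast
    from qconj_eq_iff_of_commute[OF this] show ?thesis
      unfolding gproj_gact[OF fin mod] gproj_gproj[OF fin mod]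
      by (auto simp: eq_commute[of g g0])
  qed simp
  then show ?thesis
    unfolding cent_proj_def gproj_sum by (auto simp: cent_proj_def)
qed

lemma gproj_of_cent_proj_fixed:
  "cent_proj B act g0 c x = x \<Longrightarrow> gproj B act g x = (if g = g0 then x else (\<lambda>_. 0))"
  using gproj_cent_proj[of g x] by simp

lemma cent_proj_gact_average:
  assumes "\<And>y. (\<Sum>z'\<in>UNIV. c z' * c (qmul (qinv (qmul z' k)) y)) = \<tau> * c y"
  shows "(\<lambda>j. \<Sum>z\<in>UNIV. c z * gact B act z (\<lambda>j'. \<Sum>z'\<in>UNIV. c z' * gact B act (qmul z' k) p j') j)
    = (\<lambda>j. \<tau> * (\<Sum>y\<in>UNIV. c y * gact B act y p j))"
proof (rule ext)
  fix j
  have "(\<Sum>z\<in>UNIV. c z * gact B act z (\<lambda>j'. \<Sum>z'\<in>UNIV. c z' * gact B act (qmul z' k) p j') j)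
      = (\<Sum>z\<in>UNIV. \<Sum>z'\<in>UNIV. c z * (c z' * gact B act (qmul (qmul z' k) z) p j))"
    unfolding gact_sum gact_gact[OF fin mod] by (simp add: sum_distrib_left)
  also have "\<dots> = (\<Sum>z'\<in>UNIV. c z' * (\<Sum>z\<in>UNIV. c z * gact B act (qmul (qmul z' k) z) p j))"
    by (subst sum.swap) (simp add: sum_distrib_left algebra_simps)
  also have "\<dots> = (\<Sum>z'\<in>UNIV. c z' * (\<Sum>y\<in>UNIV. c (qmul (qinv (qmul z' k)) y) * gact B act y p j))"
  proof (rule sum.cong[OF refl])
    fix z'
    show "c z' * (\<Sum>z\<in>UNIV. c z * gact B act (qmul (qmul z' k) z) p j)
        = c z' * (\<Sum>y\<in>UNIV. c (qmul (qinv (qmul z' k)) y) * gact B act y p j)"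
      using sum_qmul_left[of "\<lambda>y. c (qmul (qinv (qmul z' k)) y) * gact B act y p j" "qmul z' k"]
      by (simp only: qmul_qinv_cancel)
  qed
  also have "\<dots> = (\<Sum>y\<in>UNIV. (\<Sum>z'\<in>UNIV. c z' * c (qmul (qinv (qmul z' k)) y)) * gact B act y p j)"
    by (simp add: sum_distrib_left sum_distrib_right algebra_simps) (rule sum.swap)
  finally show "(\<Sum>z\<in>UNIV. c z * gact B act z (\<lambda>j'. \<Sum>z'\<in>UNIV. c z' * gact B act (qmul z' k) p j') j)
      = \<tau> * (\<Sum>y\<in>UNIV. c y * gact B act y p j)"
    by (simp add: assms sum_distrib_left algebra_simps)
qed

lemma cent_proj_gact_of_fixed:
  assumes spherical: "\<And>k y. qmul k g0 = qmul g0 k \<Longrightarrow>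
      (\<Sum>z'\<in>UNIV. c z' * c (qmul (qinv (qmul z' k)) y)) = \<tau> k * c y"
    and vanish: "\<And>k. qmul k g0 \<noteq> qmul g0 k \<Longrightarrow> \<tau> k = 0"
    and x: "cent_proj B act g0 c x = x"
  shows "cent_proj B act g0 c (gact B act k x) = (\<lambda>j. \<tau> k * x j)"
proof -
  have "gproj B act g0 x = x"
    using gproj_of_cent_proj_fixed[OF x] by simp
  then have x_avg: "x = (\<lambda>j. \<Sum>z'\<in>UNIV. c z' * gact B act z' x j)"
    using x unfolding cent_proj_def by simp
  have proj: "gproj B act g0 (gact B act k x) = (if qmul k g0 = qmul g0 k then gact B act k x else (\<lambda>_. 0))"
    unfolding gproj_gact[OF fin mod] gproj_of_cent_proj_fixed[OF x] qconj_fixed_iff by simp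
  show ?thesis
  proof (cases "qmul k g0 = qmul g0 k")
    case True
    have "gact B act k x = (\<lambda>j'. \<Sum>z'\<in>UNIV. c z' * gact B act (qmul z' k) x j')"
      by (subst x_avg) (simp only: gact_sum gact_gact[OF fin mod])
    then have "cent_proj B act g0 c (gact B act k x) = (\<lambda>j. \<tau> k * (\<Sum>y\<in>UNIV. c y * gact B act y x j))"
      unfolding cent_proj_def proj using True cent_proj_gact_average[OF spherical[OF True]] by simp
    also have "\<dots> = (\<lambda>j. \<tau> k * x j)"
      by (subst (2) x_avg) simp
    finally show ?thesis .
  qed (simp add: vanish cent_proj_def proj)
qed

lemma cent_proj_idem:
  assumes "\<And>y. (\<Sum>z\<in>UNIV. c z * c (qmul (qinv z) y)) = c y"
  shows "cent_proj B act g0 c (cent_proj B act g0 c v) = cent_proj B act g0 c v"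
proof -
  have "cent_proj B act g0 c (cent_proj B act g0 c v)
      = (\<lambda>j. \<Sum>z\<in>UNIV. c z * gact B act z (\<lambda>j'. \<Sum>z'\<in>UNIV. c z' * gact B act (qmul z' qe) (gproj B act g0 v) j') j)"
    unfolding cent_proj_def[of B act g0 c "cent_proj B act g0 c v"] gproj_cent_proj
    by (simp add: cent_proj_def)
  also have "\<dots> = (\<lambda>j. 1 * (\<Sum>y\<in>UNIV. c y * gact B act y (gproj B act g0 v) j))"
    by (rule cent_proj_gact_average) (simp add: assms)
  finally show ?thesis
    by (simp add: cent_proj_def)
qed

end

lemma centralizer_idempotentD:
  assumes "centralizer_idempotent g0 c"
  shows "c z \<noteq> 0 \<Longrightarrow> qmul z g0 = qmul g0 z" and "c qe \<noteq> 0"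
    and "qmul k g0 = qmul g0 k \<Longrightarrow>
      (\<Sum>z\<in>UNIV. c z * c (qmul (qinv (qmul z k)) y)) = c (qinv k) / c qe * c y"
  using assms unfolding centralizer_idempotent_def by simp_all

lemma centralizer_idempotent_conv:
  assumes "centralizer_idempotent g0 c"
  shows "(\<Sum>z\<in>UNIV. c z * c (qmul (qinv z) y)) = c y"
  using centralizer_idempotentD(3)[OF assms, of qe y] centralizer_idempotentD(2)[OF assms] by simp

lemma centralizer_idempotent_vanish:
  assumes "centralizer_idempotent g0 c" "qmul k g0 \<noteq> qmul g0 k"
  shows "c (qinv k) = 0"
  using centralizer_idempotentD(1)[OF assms(1), of "qinv k"] assms(2) qinv_commute_iff by blast

lemma centralizer_idempotent_triple_sum:
  assumes "centralizer_idempotent g0 c"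
  shows "(\<Sum>k\<in>UNIV. \<Sum>h\<in>UNIV. c h * c (qmul k (qinv h)) * c (qinv k)) = c qe"
proof -
  have "(\<Sum>h\<in>UNIV. c h * c (qmul k (qinv h))) = c k" for k
  proof -
    have "(\<Sum>h\<in>UNIV. c h * c (qmul k (qinv h))) = (\<Sum>z\<in>UNIV. c (qmul (qinv z) k) * c z)"
      by (rule sum.reindex_bij_witness[where i = "\<lambda>z. qmul (qinv z) k" and j = "\<lambda>h. qmul k (qinv h)"])
        (auto simp: q8.assoc qmul_qinv_cancel q8.inverse_distrib_swap)
    then show ?thesis
      using centralizer_idempotent_conv[OF assms, of k] by (simp add: mult.commute)
  qed
  then have "(\<Sum>k\<in>UNIV. \<Sum>h\<in>UNIV. c h * c (qmul k (qinv h)) * c (qinv k)) = (\<Sum>k\<in>UNIV. c k * c (qinv k))"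
    by (simp flip: sum_distrib_right)
  then show ?thesis
    using centralizer_idempotent_conv[OF assms, of qe] by simp
qed

section \<open>Simple modules as direct summands\<close>

lemma module_homI:
  assumes finB: "finite B"
    and matrix: "\<And>v. v \<in> Vec B \<Longrightarrow> vecmat B C v F = \<Phi> v"
    and commute: "\<And>v g h. v \<in> Vec B \<Longrightarrow> \<Phi> (vact B act g h v) = vact C act' g h (\<Phi> v)"
  shows "module_hom B act C act' F"
  unfolding module_hom_def
proof (intro allI ballI)
  fix g h i k assume i: "i \<in> B" and k: "k \<in> C"
  have e_i: "unit_vec i \<in> Vec B"
    using i by (simp add: Vec_def unit_vec_def)
  have act_e_i: "vact B act g h (unit_vec i) = (\<lambda>j. if j \<in> B then act g h i j else 0)"
    unfolding vact_def unit_vec_def using finB i by (intro ext) simp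
  have "(\<Sum>j\<in>C. F i j * act' g h j k) = vact C act' g h (\<Phi> (unit_vec i)) k"
    using k unfolding matrix[OF e_i, symmetric] vecmat_unit_vec[OF finB i] vact_def
    by (auto intro!: sum.cong)
  also have "\<dots> = \<Phi> (vact B act g h (unit_vec i)) k"
    by (simp add: commute[OF e_i])
  also have "\<dots> = vecmat B C (vact B act g h (unit_vec i)) F k"
    by (simp add: matrix act_e_i Vec_def)
  also have "\<dots> = (\<Sum>j\<in>B. act g h i j * F j k)"
    using k unfolding act_e_i vecmat_def by (auto intro!: sum.cong)
  finally show "(\<Sum>j\<in>C. F i j * act' g h j k) = (\<Sum>j\<in>B. act g h i j * F j k)" .
qed

lemma direct_summandI:
  assumes F: "module_hom B act C act' F" and G: "module_hom C act' B act G" and "\<kappa> \<noteq> 0"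
    and GF: "\<And>i k. i \<in> B \<Longrightarrow> k \<in> B \<Longrightarrow> (\<Sum>j\<in>C. F i j * G j k) = \<kappa> * (if i = k then 1 else 0)"
  shows "direct_summand B act C act'"
proof -
  have "module_hom C act' B act (\<lambda>k i. G k i / \<kappa>)"
    using G unfolding module_hom_def
    by (simp add: sum_divide_distrib[symmetric] mult.commute[of _ "G _ _ / \<kappa>"] times_divide_eq_left
        flip: mult.assoc)
  moreover have "(\<Sum>j\<in>C. F i j * (G j k / \<kappa>)) = (if i = k then 1 else 0)" if "i \<in> B" "k \<in> B" for i k
    using GF[OF that] \<open>\<kappa> \<noteq> 0\<close> by (simp add: sum_divide_distrib[symmetric] times_divide_eq_right)
  ultimately show ?thesis
    unfolding direct_summand_def using F by blast
qed

lemma vact_scale: "vact B act g h (\<lambda>i. a * x i) = (\<lambda>k. a * vact B act g h x k)"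
  unfolding vact_def by (auto simp: sum_distrib_left mult.assoc)

lemma simple_module_eigenvector:
  assumes simple: "simple_module B act"
    and add: "\<And>a x y. \<Phi> (\<lambda>i. a * x i + y i) = (\<lambda>k. a * \<Phi> x k + \<Phi> y k)"
    and commute: "\<And>g h v. \<Phi> (vact B act g h v) = vact B act g h (\<Phi> v)"
    and w: "w \<in> Vec B" "w \<noteq> (\<lambda>_. 0)" "\<Phi> w = (\<lambda>j. \<kappa> * w j)"
    and v: "v \<in> Vec B"
  shows "\<Phi> v = (\<lambda>j. \<kappa> * v j)"
proof -
  let ?U = "{v \<in> Vec B. \<Phi> v = (\<lambda>j. \<kappa> * v j)}"
  have "\<Phi> (\<lambda>_. 0) k = \<Phi> (\<lambda>_. 0) k + \<Phi> (\<lambda>_. 0) k" for k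
    using fun_cong[OF add[of 1 "\<lambda>_. 0" "\<lambda>_. 0"], of k] by simp
  then have zero: "\<Phi> (\<lambda>_. 0) = (\<lambda>_. 0)"
    by (simp add: fun_eq_iff)
  have "submodule B act ?U"
    unfolding submodule_def csubspace_def
  proof (intro conjI ballI allI)
    show "(\<lambda>_. 0) \<in> ?U"
      by (simp add: zero Vec_def)
  next
    fix x y assume "x \<in> ?U" "y \<in> ?U"
    then show "(\<lambda>p. x p + y p) \<in> ?U"
      using add[of 1 x y] by (auto simp: Vec_def algebra_simps)
  next
    fix a x assume "x \<in> ?U"
    then show "(\<lambda>p. a * x p) \<in> ?U"
      using add[of a x "\<lambda>_. 0"] by (auto simp: Vec_def zero)
  next
    fix v g h assume "v \<in> ?U"
    then show "vact B act g h v \<in> ?U"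
      by (simp add: commute vact_scale) (simp add: Vec_def vact_def)
  qed blast
  moreover have "?U \<noteq> {\<lambda>_. 0}"
    using w by blast
  ultimately have "?U = Vec B"
    using simple unfolding simple_module_def by blast
  then show ?thesis
    using v by blast
qed

text \<open>The average over the group of the rank-one map \<open>v \<mapsto> (\<phi>\<^sub>g\<^sub>0 c v)(b\<^sub>0) u\<close>; it is a module
  map as soon as \<open>u\<close> is fixed by \<open>\<phi>\<^sub>g\<^sub>0 c\<close>.\<close>

definition intertwiner :: "'b set \<Rightarrow> 'b dact \<Rightarrow> 'c set \<Rightarrow> 'c dact \<Rightarrow> q8 \<Rightarrow> (q8 \<Rightarrow> complex)
    \<Rightarrow> ('c \<Rightarrow> complex) \<Rightarrow> 'b \<Rightarrow> ('b \<Rightarrow> complex) \<Rightarrow> 'c \<Rightarrow> complex" where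
  "intertwiner B act C act' g0 c u b0 v =
     (\<lambda>k. \<Sum>h\<in>UNIV. cent_proj B act g0 c (gact B act (qinv h) v) b0 * gact C act' h u k)"

lemma intertwiner_in_Vec [simp]: "intertwiner B act C act' g0 c u b0 v \<in> Vec C"
  by (simp add: intertwiner_def Vec_def gact_outside)

lemma intertwiner_add:
  "intertwiner B act C act' g0 c u b0 (\<lambda>i. a * x i + y i)
    = (\<lambda>k. a * intertwiner B act C act' g0 c u b0 x k + intertwiner B act C act' g0 c u b0 y k)"
  unfolding intertwiner_def gact_add cent_proj_add by (simp add: sum.distrib sum_distrib_left algebra_simps)

lemma intertwiner_sum:
  "intertwiner B act C act' g0 c u b0 (\<lambda>j. \<Sum>l\<in>L. a l * f l j)
    = (\<lambda>k. \<Sum>l\<in>L. a l * intertwiner B act C act' g0 c u b0 (f l) k)"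
proof (rule ext)
  fix k
  have "intertwiner B act C act' g0 c u b0 (\<lambda>j. \<Sum>l\<in>L. a l * f l j) k
      = (\<Sum>h\<in>UNIV. \<Sum>l\<in>L. a l * (cent_proj B act g0 c (gact B act (qinv h) (f l)) b0 * gact C act' h u k))"
    unfolding intertwiner_def gact_sum cent_proj_sum by (simp add: sum_distrib_right mult.assoc)
  also have "\<dots> = (\<Sum>l\<in>L. a l * intertwiner B act C act' g0 c u b0 (f l) k)"
    by (subst sum.swap) (simp add: sum_distrib_left intertwiner_def)
  finally show "intertwiner B act C act' g0 c u b0 (\<lambda>j. \<Sum>l\<in>L. a l * f l j) k
      = (\<Sum>l\<in>L. a l * intertwiner B act C act' g0 c u b0 (f l) k)" .
qed

context
  fixes B :: "'b set" and act :: "'b dact" and C :: "'c set" and act' :: "'c dact"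
    and g0 :: q8 and c :: "q8 \<Rightarrow> complex" and u :: "'c \<Rightarrow> complex" and b0 :: 'b
  assumes finB: "finite B" and modB: "is_module B act"
    and finC: "finite C" and modC: "is_module C act'"
    and supp: "\<forall>z. c z \<noteq> 0 \<longrightarrow> qmul z g0 = qmul g0 z"
    and u: "cent_proj C act' g0 c u = u"
begin

lemma intertwiner_eq_vecmat:
  assumes "v \<in> Vec B"
  shows "intertwiner B act C act' g0 c u b0 v
    = vecmat B C v (\<lambda>i k. intertwiner B act C act' g0 c u b0 (unit_vec i) k)"
proof -
  have "intertwiner B act C act' g0 c u b0 v
      = (\<lambda>k. \<Sum>i\<in>B. v i * intertwiner B act C act' g0 c u b0 (unit_vec i) k)"
    by (subst Vec_sum_unit_vec[OF finB assms]) (rule intertwiner_sum)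
  then show ?thesis
    by (auto simp: vecmat_def intertwiner_def gact_outside)
qed

lemma intertwiner_gact:
  "intertwiner B act C act' g0 c u b0 (gact B act h' v) = gact C act' h' (intertwiner B act C act' g0 c u b0 v)"
proof -
  have "intertwiner B act C act' g0 c u b0 (gact B act h' v)
      = (\<lambda>k. \<Sum>h\<in>UNIV. cent_proj B act g0 c (gact B act (qmul h' (qinv h)) v) b0 * gact C act' h u k)"
    by (simp add: intertwiner_def gact_gact[OF finB modB])
  also have "\<dots> = (\<lambda>k. \<Sum>h\<in>UNIV. cent_proj B act g0 c (gact B act (qmul h' (qinv (qmul h h'))) v) b0
      * gact C act' (qmul h h') u k)"
    by (intro ext) (rule sum_qmul_right[symmetric])
  also have "\<dots> = gact C act' h' (intertwiner B act C act' g0 c u b0 v)"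
    by (simp add: intertwiner_def gact_sum gact_gact[OF finC modC] q8.inverse_distrib_swap
        q8.assoc qmul_qinv_cancel)
  finally show ?thesis .
qed

lemma intertwiner_gproj:
  "intertwiner B act C act' g0 c u b0 (gproj B act g v) = gproj C act' g (intertwiner B act C act' g0 c u b0 v)"
proof -
  have "cent_proj B act g0 c (gact B act (qinv h) (gproj B act g v)) b0
      = (if qmul (qmul h g) (qinv h) = g0 then cent_proj B act g0 c (gact B act (qinv h) v) b0 else 0)" for h
  proof -
    have "gact B act (qinv h) (gproj B act g v) = gproj B act (qmul (qmul h g) (qinv h)) (gact B act (qinv h) v)"
      by (simp add: gproj_gact[OF finB modB] q8.assoc qmul_qinv_cancel)
    then show ?thesis
      by (simp add: cent_proj_gproj[OF finB modB supp])
  qed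
  moreover have "gproj C act' g (gact C act' h u)
      = (if qmul (qmul h g) (qinv h) = g0 then gact C act' h u else (\<lambda>_. 0))" for h
    unfolding gproj_gact[OF finC modC] gproj_of_cent_proj_fixed[OF finC modC supp u] by simp
  ultimately show ?thesis
    unfolding intertwiner_def gproj_sum by (intro ext sum.cong refl) auto
qed

lemma intertwiner_vact:
  "intertwiner B act C act' g0 c u b0 (vact B act g h v) = vact C act' g h (intertwiner B act C act' g0 c u b0 v)"
  unfolding vact_eq_gact_gproj[OF finB modB] vact_eq_gact_gproj[OF finC modC] intertwiner_gact intertwiner_gproj ..

lemma module_hom_intertwiner:
  "module_hom B act C act' (\<lambda>i k. intertwiner B act C act' g0 c u b0 (unit_vec i) k)"
  by (rule module_homI[OF finB, where \<Phi> = "intertwiner B act C act' g0 c u b0"])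
    (simp_all only: intertwiner_eq_vecmat[symmetric] intertwiner_vact)

end

context
  fixes B :: "'b set" and act :: "'b dact" and C :: "'c set" and act' :: "'c dact"
    and g0 :: q8 and c :: "q8 \<Rightarrow> complex"
    and w :: "'b \<Rightarrow> complex" and u :: "'c \<Rightarrow> complex" and b0 :: 'b and t0 :: 'c
  assumes finB: "finite B" and modB: "is_module B act" and simple: "simple_module B act"
    and finC: "finite C" and modC: "is_module C act'"
    and idem: "centralizer_idempotent g0 c"
    and w: "cent_proj B act g0 c w = w" and b0: "b0 \<in> B" "w b0 \<noteq> 0"
    and u: "cent_proj C act' g0 c u = u" and t0: "t0 \<in> C" "u t0 \<noteq> 0"
begin

abbreviation (input) "embed_map \<equiv> intertwiner B act C act' g0 c u b0"
abbreviation (input) "retract_map \<equiv> intertwiner C act' B act g0 c w t0"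

lemma supp: "\<forall>z. c z \<noteq> 0 \<longrightarrow> qmul z g0 = qmul g0 z"
  using centralizer_idempotentD(1)[OF idem] by blast

definition spherical :: "q8 \<Rightarrow> complex" where "spherical k = c (qinv k) / c qe"

lemma cent_proj_gact_fixed_vector:
  "cent_proj B act g0 c (gact B act k w) = (\<lambda>j. spherical k * w j)"
  "cent_proj C act' g0 c (gact C act' k u) = (\<lambda>j. spherical k * u j)"
proof -
  have "qmul k g0 = qmul g0 k \<Longrightarrow> (\<Sum>z\<in>UNIV. c z * c (qmul (qinv (qmul z k)) y)) = spherical k * c y"
    and "qmul k g0 \<noteq> qmul g0 k \<Longrightarrow> spherical k = 0" for k y
    by (simp_all add: spherical_def centralizer_idempotentD(3)[OF idem] centralizer_idempotent_vanish[OF idem])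
  then show "cent_proj B act g0 c (gact B act k w) = (\<lambda>j. spherical k * w j)"
    and "cent_proj C act' g0 c (gact C act' k u) = (\<lambda>j. spherical k * u j)"
    by (simp_all add: cent_proj_gact_of_fixed[OF finB modB supp] cent_proj_gact_of_fixed[OF finC modC supp] w u)
qed

lemma round_trip_cent_proj: "retract_map (embed_map (cent_proj B act g0 c v)) = cent_proj B act g0 c (retract_map (embed_map v))"
  unfolding cent_proj_def intertwiner_sum
  by (simp only: intertwiner_gact[OF finB modB finC modC supp u] intertwiner_gact[OF finC modC finB modB supp w]
      intertwiner_gproj[OF finB modB finC modC supp u] intertwiner_gproj[OF finC modC finB modB supp w])

lemma spherical_triple_sum: "(\<Sum>k\<in>UNIV. \<Sum>h\<in>UNIV. spherical (qinv h) * spherical (qmul h (qinv k)) * spherical k) = 1 / c qe ^ 2"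
proof -
  have "(\<Sum>k\<in>UNIV. \<Sum>h\<in>UNIV. spherical (qinv h) * spherical (qmul h (qinv k)) * spherical k)
      = (\<Sum>k\<in>UNIV. \<Sum>h\<in>UNIV. c h * c (qmul k (qinv h)) * c (qinv k)) / c qe ^ 3"
    by (simp add: spherical_def q8.inverse_distrib_swap sum_divide_distrib power3_eq_cube)
  then show ?thesis
    using centralizer_idempotentD(2)[OF idem]
    by (simp add: centralizer_idempotent_triple_sum[OF idem] power3_eq_cube power2_eq_square)
qed

lemma round_trip_fixed_vector: "retract_map (embed_map w) = (\<lambda>j. w b0 * u t0 / c qe ^ 2 * w j)"
proof -
  have Fw: "embed_map w = (\<lambda>k. \<Sum>h\<in>UNIV. (spherical (qinv h) * w b0) * gact C act' h u k)"
    by (simp add: cent_proj_gact_fixed_vector intertwiner_def)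
  have GFw: "retract_map (embed_map w) = (\<lambda>i. \<Sum>k\<in>UNIV. (\<Sum>h\<in>UNIV. (spherical (qinv h) * w b0) * (spherical (qmul h (qinv k)) * u t0))
      * gact B act k w i)"
    unfolding Fw intertwiner_def[of C act' B act g0 c w t0] gact_sum gact_gact[OF finC modC] cent_proj_sum
      cent_proj_gact_fixed_vector
    by (simp add: sum_distrib_right ac_simps)
  have "cent_proj B act g0 c (retract_map (embed_map w)) = (\<lambda>j. w b0 * u t0 *
      (\<Sum>k\<in>UNIV. \<Sum>h\<in>UNIV. spherical (qinv h) * spherical (qmul h (qinv k)) * spherical k) * w j)"
    unfolding GFw cent_proj_sum cent_proj_gact_fixed_vector
    by (intro ext) (simp add: sum_distrib_left sum_distrib_right ac_simps)
  then show ?thesis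
    using round_trip_cent_proj[of w] w by (simp add: spherical_triple_sum)
qed

lemma round_trip: "v \<in> Vec B \<Longrightarrow> retract_map (embed_map v) = (\<lambda>j. w b0 * u t0 / c qe ^ 2 * v j)"
proof (rule simple_module_eigenvector[OF simple])
  show "retract_map (embed_map (\<lambda>i. a * x i + y i)) = (\<lambda>k. a * retract_map (embed_map x) k + retract_map (embed_map y) k)" for a x y
    by (simp only: intertwiner_add)
  show "retract_map (embed_map (vact B act g h v)) = vact B act g h (retract_map (embed_map v))" for g h v
    by (simp only: intertwiner_vact[OF finB modB finC modC supp u] intertwiner_vact[OF finC modC finB modB supp w])
  show "w \<in> Vec B" "w \<noteq> (\<lambda>_. 0)"
    using w b0 cent_proj_in_Vec[of B act g0 c w] by auto
qed (rule round_trip_fixed_vector)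

theorem direct_summand_of_fixed_vectors: "direct_summand B act C act'"
proof (rule direct_summandI)
  show "module_hom B act C act' (\<lambda>i k. embed_map (unit_vec i) k)"
    by (rule module_hom_intertwiner[OF finB modB finC modC supp u])
  show "module_hom C act' B act (\<lambda>k i. retract_map (unit_vec k) i)"
    by (rule module_hom_intertwiner[OF finC modC finB modB supp w])
  show "w b0 * u t0 / c qe ^ 2 \<noteq> 0"
    using b0 t0 centralizer_idempotentD(2)[OF idem] by simp
  fix i k assume i: "i \<in> B" and k: "k \<in> B"
  have "unit_vec i \<in> Vec B"
    using i by (simp add: Vec_def unit_vec_def)
  from round_trip[OF this]
  have "retract_map (embed_map (unit_vec i)) k = w b0 * u t0 / c qe ^ 2 * (if i = k then 1 else 0)"
    by (auto simp: unit_vec_def)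
  moreover have "retract_map (embed_map (unit_vec i)) k = (\<Sum>j\<in>C. embed_map (unit_vec i) j * retract_map (unit_vec j) k)"
    using k by (simp add: intertwiner_eq_vecmat[OF finC modC finB modB supp w] vecmat_def)
  ultimately show "(\<Sum>j\<in>C. embed_map (unit_vec i) j * retract_map (unit_vec j) k) = w b0 * u t0 / c qe ^ 2 * (if i = k then 1 else 0)"
    by simp
qed

end

section \<open>Every simple module is a summand of a tensor power of \<open>V\<close>\<close>

text \<open>\<open>q8_fun [x\<^sub>0, \<dots>, x\<^sub>7]\<close> takes the value \<open>x\<^sub>a\<^sub>+\<^sub>4\<^sub>b\<close> at \<open>r\<^sup>a s\<^sup>b\<close>.\<close>

definition q8_fun :: "complex list \<Rightarrow> q8 \<Rightarrow> complex" where
  "q8_fun vs x = (case Rep_q8 x of (a, b) \<Rightarrow> vs ! (a + 4 * b))"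

lemma q8_fun_qmk [simp]: "q8_fun vs (qmk a b) = vs ! (a mod 4 + 4 * (b mod 2))"
  by (simp add: q8_fun_def)

definition summand_witness :: "q8 \<Rightarrow> (q8 \<Rightarrow> complex) \<Rightarrow> vb list \<Rightarrow> bool" where
  "summand_witness g0 c t \<longleftrightarrow> centralizer_idempotent g0 c \<and> length t \<in> {1..4} \<and> tgr t = g0
     \<and> (\<Sum>z\<in>UNIV. c z * tA z t t) \<noteq> 0"

definition summand_witnesses :: "q8 \<Rightarrow> ((q8 \<Rightarrow> complex) \<times> vb list) list \<Rightarrow> bool" where
  "summand_witnesses g0 cts \<longleftrightarrow> (\<forall>(c, t)\<in>set cts. summand_witness g0 c t)
     \<and> (\<forall>z. (\<Sum>(c, t)\<leftarrow>cts. c z) = (if z = qe then 1 else 0))"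

lemma cent_proj_tensor_unit_vec:
  assumes "tgr t = g0"
  shows "cent_proj (tensor_basis (length t)) (grmod tgr tA) g0 c (unit_vec t) t = (\<Sum>z\<in>UNIV. c z * tA z t t)"
proof -
  have t: "t \<in> tensor_basis (length t)"
    by simp
  have "gproj (tensor_basis (length t)) (grmod tgr tA) g0 (unit_vec t) = unit_vec t"
    unfolding gproj_def vecmat_unit_vec[OF finite_tensor_basis t]
    using assms by (intro ext) (auto simp: grmod_def tA_qe unit_vec_def)
  moreover have "gact (tensor_basis (length t)) (grmod tgr tA) z (unit_vec t) t = tA z t t" for z
    unfolding gact_def vecmat_unit_vec[OF finite_tensor_basis t] by (simp add: gmat_def grmod_def)
  ultimately show ?thesis
    by (simp add: cent_proj_def)
qed

lemma direct_summand_of_witness: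
  assumes witness: "summand_witness g0 c t"
    and finB: "finite B" and modB: "is_module B act" and simple: "simple_module B act"
    and v: "cent_proj B act g0 c v \<noteq> (\<lambda>_. 0)"
  shows "\<exists>m\<in>{1..4}. direct_summand B act (tensor_basis m) (grmod tgr tA)"
proof -
  have idem: "centralizer_idempotent g0 c" and len: "length t \<in> {1..4}" and "tgr t = g0"
    and "(\<Sum>z\<in>UNIV. c z * tA z t t) \<noteq> 0"
    using witness unfolding summand_witness_def by blast+
  let ?C = "tensor_basis (length t)" and ?u = "cent_proj (tensor_basis (length t)) (grmod tgr tA) g0 c (unit_vec t)"
  have supp: "\<forall>z. c z \<noteq> 0 \<longrightarrow> qmul z g0 = qmul g0 z"
    using centralizer_idempotentD(1)[OF idem] by blast
  note conv = centralizer_idempotent_conv[OF idem]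
  obtain b0 where b0: "b0 \<in> B" "cent_proj B act g0 c v b0 \<noteq> 0"
    using v cent_proj_in_Vec[of B act g0 c v] unfolding Vec_def by blast
  have "direct_summand B act ?C (grmod tgr tA)"
  proof (rule direct_summand_of_fixed_vectors[OF finB modB simple finite_tensor_basis
        is_module_tensor_power idem])
    show "cent_proj B act g0 c (cent_proj B act g0 c v) = cent_proj B act g0 c v"
      by (rule cent_proj_idem[OF finB modB supp conv])
    show "cent_proj ?C (grmod tgr tA) g0 c ?u = ?u"
      by (rule cent_proj_idem[OF finite_tensor_basis is_module_tensor_power supp conv])
    show "t \<in> ?C"
      by simp
    show "?u t \<noteq> 0"
      using cent_proj_tensor_unit_vec[OF \<open>tgr t = g0\<close>] \<open>(\<Sum>z\<in>UNIV. c z * tA z t t) \<noteq> 0\<close> by simp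
  qed (rule b0)+
  then show ?thesis
    using len by blast
qed

lemma cent_proj_sum_list:
  "cent_proj B act g0 (\<lambda>z. \<Sum>x\<leftarrow>xs. f x z) v = (\<lambda>j. \<Sum>x\<leftarrow>xs. cent_proj B act g0 (f x) v j)"
  by (induction xs) (simp_all add: cent_proj_def sum.distrib algebra_simps fun_eq_iff)

lemma cent_proj_delta:
  "finite B \<Longrightarrow> is_module B act \<Longrightarrow> cent_proj B act g0 (\<lambda>z. if z = qe then 1 else 0) v = gproj B act g0 v"
  unfolding cent_proj_def by (simp add: gact_qe)

lemma direct_summand_of_witnesses:
  assumes witnesses: "summand_witnesses g0 cts"
    and finB: "finite B" and modB: "is_module B act" and simple: "simple_module B act"
    and v: "gproj B act g0 v \<noteq> (\<lambda>_. 0)"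
  shows "\<exists>m\<in>{1..4}. direct_summand B act (tensor_basis m) (grmod tgr tA)"
proof -
  have "(\<lambda>z. \<Sum>(c, t)\<leftarrow>cts. c z) = (\<lambda>z. if z = qe then 1 else 0)"
    using witnesses unfolding summand_witnesses_def by blast
  then have "gproj B act g0 v = (\<lambda>j. \<Sum>(c, t)\<leftarrow>cts. cent_proj B act g0 c v j)"
    using cent_proj_sum_list[of B act g0 "\<lambda>(c, t) z. c z" cts v]
    by (simp add: case_prod_unfold cent_proj_delta[OF finB modB])
  moreover have "(\<lambda>j. \<Sum>(c, t)\<leftarrow>cts. cent_proj B act g0 c v j) = (\<lambda>_. 0)"
    if "\<forall>(c, t)\<in>set cts. cent_proj B act g0 c v = (\<lambda>_. 0)"
    using that by (induction cts) auto
  ultimately have "\<not> (\<forall>(c, t)\<in>set cts. cent_proj B act g0 c v = (\<lambda>_. 0))"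
    using v by auto
  then obtain c t where "(c, t) \<in> set cts" "cent_proj B act g0 c v \<noteq> (\<lambda>_. 0)"
    by auto
  then show ?thesis
    using witnesses direct_summand_of_witness[OF _ finB modB simple] unfolding summand_witnesses_def by blast
qed

lemma summand_witnesses_e:
  "summand_witnesses (qmk 0 0)
    [(q8_fun [1/8, 1/8, 1/8, 1/8, 1/8, 1/8, 1/8, 1/8], [U17, V17]),
     (q8_fun [1/8, 1/8, 1/8, 1/8, -1/8, -1/8, -1/8, -1/8], [U17, U17, U20, U20]),
     (q8_fun [1/8, -1/8, 1/8, -1/8, 1/8, -1/8, 1/8, -1/8], [U17, V17]),
     (q8_fun [1/8, -1/8, 1/8, -1/8, -1/8, 1/8, -1/8, 1/8], [U20, V20]),
     (q8_fun [1/4, -\<i>/4, -1/4, \<i>/4, 0, 0, 0, 0], [U20, V21]),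
     (q8_fun [1/4, \<i>/4, -1/4, -\<i>/4, 0, 0, 0, 0], [U20, V21])]"
  unfolding summand_witnesses_def summand_witness_def centralizer_idempotent_def q8_all sum_q8
  by (simp add: q8_generators mid_def)

lemma summand_witnesses_r2:
  "summand_witnesses (qmk 2 0)
    [(q8_fun [1/8, 1/8, 1/8, 1/8, 1/8, 1/8, 1/8, 1/8], [U20, U20]),
     (q8_fun [1/8, 1/8, 1/8, 1/8, -1/8, -1/8, -1/8, -1/8], [U17, U17]),
     (q8_fun [1/8, -1/8, 1/8, -1/8, 1/8, -1/8, 1/8, -1/8], [U21, U21]),
     (q8_fun [1/8, -1/8, 1/8, -1/8, -1/8, 1/8, -1/8, 1/8], [U17, U17]),
     (q8_fun [1/4, -\<i>/4, -1/4, \<i>/4, 0, 0, 0, 0], [U20, U21]),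
     (q8_fun [1/4, \<i>/4, -1/4, -\<i>/4, 0, 0, 0, 0], [U20, U21])]"
  unfolding summand_witnesses_def summand_witness_def centralizer_idempotent_def q8_all sum_q8
  by (simp add: q8_generators mid_def)

lemma summand_witnesses_r:
  "summand_witnesses (qmk 1 0)
    [(q8_fun [1/4, 1/4, 1/4, 1/4, 0, 0, 0, 0], [U17, V21]),
     (q8_fun [1/4, -\<i>/4, -1/4, \<i>/4, 0, 0, 0, 0], [U17, V20]),
     (q8_fun [1/4, -1/4, 1/4, -1/4, 0, 0, 0, 0], [U17, V21]),
     (q8_fun [1/4, \<i>/4, -1/4, -\<i>/4, 0, 0, 0, 0], [U17, V20])]"
  unfolding summand_witnesses_def summand_witness_def centralizer_idempotent_def q8_all sum_q8
  by (simp add: q8_generators mid_def)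

lemma summand_witnesses_s:
  "summand_witnesses (qmk 0 1)
    [(q8_fun [1/4, 0, 1/4, 0, 1/4, 0, 1/4, 0], [U17, U20, V21]),
     (q8_fun [1/4, 0, -1/4, 0, -\<i>/4, 0, \<i>/4, 0], [U17, U20, V20]),
     (q8_fun [1/4, 0, 1/4, 0, -1/4, 0, -1/4, 0], [U17, U20, V21]),
     (q8_fun [1/4, 0, -1/4, 0, \<i>/4, 0, -\<i>/4, 0], [U17])]"
  unfolding summand_witnesses_def summand_witness_def centralizer_idempotent_def q8_all sum_q8
  by (simp add: q8_generators mid_def)

lemma summand_witnesses_r3s:
  "summand_witnesses (qmk 3 1)
    [(q8_fun [1/4, 0, 1/4, 0, 0, 1/4, 0, 1/4], [U17, U17, V20]),
     (q8_fun [1/4, 0, -1/4, 0, 0, \<i>/4, 0, -\<i>/4], [U17, U17, V21]),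
     (q8_fun [1/4, 0, 1/4, 0, 0, -1/4, 0, -1/4], [U20]),
     (q8_fun [1/4, 0, -1/4, 0, 0, -\<i>/4, 0, \<i>/4], [U21])]"
  unfolding summand_witnesses_def summand_witness_def centralizer_idempotent_def q8_all sum_q8
  by (simp add: q8_generators mid_def)
lemma q8_conj_representative:
  "\<exists>h g0. g0 \<in> {qmk 0 0, qmk 2 0, qmk 1 0, qmk 0 1, qmk 3 1} \<and> qmul (qmul h g0) (qinv h) = g"
  by (cases g rule: q8_exhaust) (simp_all add: q8_ex)

theorem simple_module_summand_of_tensor_power:
  assumes finB: "finite B" and modB: "is_module B act" and simple: "simple_module B act"
  shows "\<exists>m\<in>{1..4}. direct_summand B act (tensor_basis m) (grmod tgr tA)"
proof -
  obtain b where b: "b \<in> B"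
    using simple unfolding simple_module_def by blast
  then have e_b: "unit_vec b \<in> Vec B" "unit_vec b \<noteq> (\<lambda>_. 0)"
    by (auto simp: Vec_def unit_vec_def fun_eq_iff)
  obtain g where g: "gproj B act g (unit_vec b) \<noteq> (\<lambda>_. 0)"
    using sum_gproj[OF finB modB e_b(1)] e_b(2) by force
  obtain h g0 where g0: "g0 \<in> {qmk 0 0, qmk 2 0, qmk 1 0, qmk 0 1, qmk 3 1}"
    and hg0: "qmul (qmul h g0) (qinv h) = g"
    using q8_conj_representative by blast
  have "gproj B act g0 (gact B act h (unit_vec b)) \<noteq> (\<lambda>_. 0)"
  proof
    assume "gproj B act g0 (gact B act h (unit_vec b)) = (\<lambda>_. 0)"
    then have "gact B act (qinv h) (gact B act h (gproj B act g (unit_vec b))) = (\<lambda>_. 0)"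
      unfolding gproj_gact[OF finB modB] hg0 by simp
    then show False
      using g gact_qinv_gact[OF finB modB gproj_in_Vec] by simp
  qed
  then show ?thesis
    using g0 direct_summand_of_witnesses[OF _ finB modB simple] summand_witnesses_e summand_witnesses_r2
      summand_witnesses_r summand_witnesses_s summand_witnesses_r3s
    by blast
qed

section \<open>Inner faithfulness\<close>

definition dual_pair :: "(q8 \<times> q8 \<Rightarrow> complex) \<Rightarrow> dd \<Rightarrow> complex" where
  "dual_pair f x = (\<Sum>p\<in>UNIV. f p * x p)"

definition dual_mult :: "(q8 \<times> q8 \<Rightarrow> complex) \<Rightarrow> (q8 \<times> q8 \<Rightarrow> complex) \<Rightarrow> q8 \<times> q8 \<Rightarrow> complex" where
  "dual_mult f1 f2 = (\<lambda>(g, h). \<Sum>x1\<in>UNIV. \<Sum>x2\<in>UNIV. if qmul x1 x2 = g then f1 (x1, h) * f2 (x2, h) else 0)"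

definition graded_fun :: "q8 \<Rightarrow> (q8 \<Rightarrow> complex) \<Rightarrow> q8 \<times> q8 \<Rightarrow> complex" where
  "graded_fun g a = (\<lambda>(x, h). if x = g then a h else 0)"

definition annihilates :: "(q8 \<times> q8 \<Rightarrow> complex) \<Rightarrow> dd set \<Rightarrow> bool" where
  "annihilates f I \<longleftrightarrow> (\<forall>x\<in>I. dual_pair f x = 0)"

lemma if_zero_mult [simp]: "(if P then a else 0) * (x :: complex) = (if P then a * x else 0)"
  by simp

lemma sum_if_const: "(\<Sum>x\<in>A. if P then f x else 0) = (if P then \<Sum>x\<in>A. f x else 0 :: complex)"
  by simp

lemma sum_UNIV_prod: "(\<Sum>p\<in>UNIV. F p) = (\<Sum>a\<in>UNIV. \<Sum>b\<in>UNIV. F (a, b) :: complex)"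
  by (simp add: sum.cartesian_product flip: UNIV_Times_UNIV)

lemma dual_mult_graded_fun:
  "dual_mult (graded_fun g1 a) (graded_fun g2 b) = graded_fun (qmul g1 g2) (\<lambda>h. a h * b h)"
proof (rule ext, clarify)
  fix g h
  have "(if qmul x1 x2 = g then graded_fun g1 a (x1, h) * graded_fun g2 b (x2, h) else 0)
      = (if x1 = g1 then if x2 = g2 then if qmul g1 g2 = g then a h * b h else 0 else 0 else 0)" for x1 x2
    by (auto simp: graded_fun_def)
  then show "dual_mult (graded_fun g1 a) (graded_fun g2 b) (g, h) = graded_fun (qmul g1 g2) (\<lambda>h. a h * b h) (g, h)"
    unfolding dual_mult_def prod.case by (simp add: sum_if_const graded_fun_def del: if_zero_mult)
qed

lemma sum_mult_cspan_eq_0: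
  assumes "y \<in> cspan S" and "\<And>s. s \<in> S \<Longrightarrow> (\<Sum>p\<in>UNIV. s p * W p) = 0"
  shows "(\<Sum>p\<in>UNIV. y p * W p) = (0 :: complex)"
  using assms
proof (induction rule: cspan.induct)
  case (add x y c)
  have "(\<Sum>p\<in>UNIV. (c * x p + y p) * W p) = c * (\<Sum>p\<in>UNIV. x p * W p) + (\<Sum>p\<in>UNIV. y p * W p)"
    by (simp add: sum.distrib sum_distrib_left algebra_simps)
  then show ?case
    using add by simp
qed simp

lemma dual_pair_dual_mult:
  "dual_pair (dual_mult f1 f2) x = (\<Sum>p\<in>UNIV. dcomul x p * (f1 (fst p) * f2 (snd p)))"
proof -
  let ?t = "\<lambda>x1 x2 h. f1 (x1, h) * f2 (x2, h) * x (qmul x1 x2, h)"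
  have "dual_pair (dual_mult f1 f2) x = (\<Sum>g\<in>UNIV. \<Sum>h\<in>UNIV. \<Sum>x1\<in>UNIV. \<Sum>x2\<in>UNIV.
      if qmul x1 x2 = g then f1 (x1, h) * f2 (x2, h) * x (g, h) else 0)"
    unfolding dual_pair_def sum_UNIV_prod dual_mult_def by (simp add: sum_distrib_right)
  also have "\<dots> = (\<Sum>h\<in>UNIV. \<Sum>x1\<in>UNIV. \<Sum>x2\<in>UNIV. \<Sum>g\<in>UNIV.
      if qmul x1 x2 = g then f1 (x1, h) * f2 (x2, h) * x (g, h) else 0)"
    by (subst sum.swap, rule sum.cong[OF refl], subst sum.swap, rule sum.cong[OF refl], rule sum.swap)
  also have "\<dots> = (\<Sum>x1\<in>UNIV. \<Sum>h\<in>UNIV. \<Sum>x2\<in>UNIV. ?t x1 x2 h)"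
    by (subst sum.swap) simp
  also have "\<dots> = (\<Sum>x1\<in>UNIV. \<Sum>h1\<in>UNIV. \<Sum>x2\<in>UNIV. \<Sum>h2\<in>UNIV. if h2 = h1 then ?t x1 x2 h1 else 0)"
    by simp
  also have "\<dots> = (\<Sum>p\<in>UNIV. dcomul x p * (f1 (fst p) * f2 (snd p)))"
    unfolding sum_UNIV_prod dcomul_def by (intro sum.cong refl) (auto simp: ac_simps)
  finally show ?thesis .
qed

context
  fixes I :: "dd set"
  assumes hopf: "hopf_ideal I"
    and kills: "\<forall>x\<in>I. \<forall>v. \<forall>j\<in>(UNIV :: vb set). dvact UNIV (grmod Vgr VA) x v j = 0"
begin

lemma annihilates_dual_mult: "annihilates f1 I \<Longrightarrow> annihilates f2 I \<Longrightarrow> annihilates (dual_mult f1 f2) I"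
  unfolding annihilates_def
proof
  fix x assume f1: "\<forall>x\<in>I. dual_pair f1 x = 0" and f2: "\<forall>x\<in>I. dual_pair f2 x = 0" and x: "x \<in> I"
  have "dcomul x \<in> cspan {tensor a b | a b. a \<in> I \<or> b \<in> I}"
    using hopf x unfolding hopf_ideal_def by blast
  then have "(\<Sum>p\<in>UNIV. dcomul x p * (f1 (fst p) * f2 (snd p))) = 0"
  proof (rule sum_mult_cspan_eq_0)
    fix s assume "s \<in> {tensor a b | a b. a \<in> I \<or> b \<in> I}"
    then obtain a b where s: "s = tensor a b" and ab: "a \<in> I \<or> b \<in> I"
      by blast
    have "(\<Sum>p\<in>UNIV. s p * (f1 (fst p) * f2 (snd p))) = dual_pair f1 a * dual_pair f2 b"
      unfolding s tensor_def dual_pair_def sum_UNIV_prod[where 'a = "q8 \<times> q8" and 'b = "q8 \<times> q8"] sum_product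
      by (simp add: ac_simps)
    then show "(\<Sum>p\<in>UNIV. s p * (f1 (fst p) * f2 (snd p))) = 0"
      using ab f1 f2 by auto
  qed
  then show "dual_pair (dual_mult f1 f2) x = 0"
    by (simp add: dual_pair_dual_mult)
qed

lemma annihilates_add:
  "annihilates f I \<Longrightarrow> annihilates f' I \<Longrightarrow> annihilates (\<lambda>p. c * f p + f' p) I"
proof -
  have "dual_pair (\<lambda>p. c * f p + f' p) x = c * dual_pair f x + dual_pair f' x" for x
    unfolding dual_pair_def by (simp add: sum.distrib sum_distrib_left algebra_simps)
  then show "annihilates f I \<Longrightarrow> annihilates f' I \<Longrightarrow> annihilates (\<lambda>p. c * f p + f' p) I"
    unfolding annihilates_def by simp
qed

lemma annihilates_graded_fun_add:
  "annihilates (graded_fun g a) I \<Longrightarrow> annihilates (graded_fun g b) I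
    \<Longrightarrow> annihilates (graded_fun g (\<lambda>h. c * a h + b h)) I"
  using annihilates_add[of "graded_fun g a" "graded_fun g b" c]
  by (simp add: graded_fun_def case_prod_unfold if_distrib cong: if_cong)

lemma annihilates_graded_fun_zero: "annihilates (graded_fun g (\<lambda>_. 0)) I"
  by (simp add: annihilates_def dual_pair_def graded_fun_def case_prod_beta)

lemma annihilates_graded_fun_mult:
  "annihilates (graded_fun g1 a) I \<Longrightarrow> annihilates (graded_fun g2 b) I
    \<Longrightarrow> annihilates (graded_fun (qmul g1 g2) (\<lambda>h. a h * b h)) I"
  using annihilates_dual_mult dual_mult_graded_fun by metis

lemma annihilates_graded_fun_sum:
  assumes "finite S" "\<And>j. j \<in> S \<Longrightarrow> annihilates (graded_fun g (a j)) I"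
  shows "annihilates (graded_fun g (\<lambda>h. \<Sum>j\<in>S. a j h)) I"
  using assms
proof (induction S rule: finite_induct)
  case empty
  then show ?case
    by (simp add: annihilates_graded_fun_zero)
next
  case (insert j S)
  then show ?case
    using annihilates_graded_fun_add[of g "a j" "\<lambda>h. \<Sum>j\<in>S. a j h" 1] by simp
qed

lemma annihilates_matrix_coeff: "annihilates (graded_fun (Vgr i) (\<lambda>h. VA h i j)) I"
  unfolding annihilates_def
proof
  fix x assume x: "x \<in> I"
  have "dvact UNIV (grmod Vgr VA) x (unit_vec i) j
      = (\<Sum>p\<in>UNIV. \<Sum>i'\<in>UNIV. unit_vec i i' * x p * grmod Vgr VA (fst p) (snd p) i' j)"
    unfolding dvact_def by (simp add: sum.swap[of _ "UNIV :: vb set"])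
  also have "\<dots> = (\<Sum>p\<in>UNIV. x p * grmod Vgr VA (fst p) (snd p) i j)"
    by (simp add: unit_vec_def)
  also have "\<dots> = dual_pair (graded_fun (Vgr i) (\<lambda>h. VA h i j)) x"
    unfolding dual_pair_def by (intro sum.cong) (auto simp: graded_fun_def grmod_def split: prod.split)
  finally show "dual_pair (graded_fun (Vgr i) (\<lambda>h. VA h i j)) x = 0"
    using kills x by simp
qed

text \<open>On grade \<open>1\<close> the product \<open>p\<close> of four matrix coefficients takes values in \<open>{\<plusminus>1, \<plusminus>\<i>}\<close>, and a
  quadratic polynomial in \<open>p\<close> isolates a single group element.\<close>

lemma annihilates_delta_qe_of_quadratic:
  fixes ia ib ic ie ja jb jc je :: vb
  defines "p \<equiv> \<lambda>h. VA h ia ja * (VA h ib jb * (VA h ic jc * VA h ie je))"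
  assumes "qmul (Vgr ia) (qmul (Vgr ib) (qmul (Vgr ic) (Vgr ie))) = qe"
    and "\<forall>h. \<beta> * (p h * p h) + \<alpha> * p h = (if h = h0 then 1 else 0)"
  shows "annihilates (graded_fun qe (\<lambda>h. if h = h0 then 1 else 0)) I"
proof -
  have p: "annihilates (graded_fun qe p) I"
    using annihilates_graded_fun_mult[OF annihilates_matrix_coeff[of ia ja]
        annihilates_graded_fun_mult[OF annihilates_matrix_coeff[of ib jb]
          annihilates_graded_fun_mult[OF annihilates_matrix_coeff[of ic jc] annihilates_matrix_coeff[of ie je]]]]
    unfolding p_def assms(2) .
  have "annihilates (graded_fun qe (\<lambda>h. \<beta> * (p h * p h) + (\<alpha> * p h + 0))) I"
    using annihilates_graded_fun_mult[OF p p]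
    by (intro annihilates_graded_fun_add p annihilates_graded_fun_zero) simp_all
  then show ?thesis
    using assms(3) by simp
qed

lemma annihilates_delta_qe: "annihilates (graded_fun qe (\<lambda>h. if h = h0 then 1 else 0)) I"
proof (cases h0 rule: q8_exhaust)
  case 1 show ?thesis
    by (rule annihilates_delta_qe_of_quadratic[where ia = U17 and ja = U17 and ib = U17 and jb = U17
          and ic = U20 and jc = U20 and ie = U21 and je = U21 and \<beta> = "1/2" and \<alpha> = "1/2"])
      (simp_all add: 1 q8_all q8_generators mid_def)
next
  case 2 show ?thesis
    by (rule annihilates_delta_qe_of_quadratic[where ia = U17 and ja = V17 and ib = U17 and jb = V17
          and ic = U20 and jc = V20 and ie = U21 and je = V21 and \<beta> = "-1/2" and \<alpha> = "-\<i>/2"])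
      (simp_all add: 2 q8_all q8_generators mid_def)
next
  case 3 show ?thesis
    by (rule annihilates_delta_qe_of_quadratic[where ia = U17 and ja = U17 and ib = U17 and jb = U17
          and ic = U20 and jc = U20 and ie = U21 and je = U21 and \<beta> = "1/2" and \<alpha> = "-1/2"])
      (simp_all add: 3 q8_all q8_generators mid_def)
next
  case 4 show ?thesis
    by (rule annihilates_delta_qe_of_quadratic[where ia = U17 and ja = V17 and ib = U17 and jb = V17
          and ic = U20 and jc = V20 and ie = U21 and je = V21 and \<beta> = "-1/2" and \<alpha> = "\<i>/2"])
      (simp_all add: 4 q8_all q8_generators mid_def)
next
  case 5 show ?thesis
    by (rule annihilates_delta_qe_of_quadratic[where ia = U17 and ja = U17 and ib = U17 and jb = U17
          and ic = U20 and jc = V20 and ie = U21 and je = V21 and \<beta> = "1/2" and \<alpha> = "-1/2"])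
      (simp_all add: 5 q8_all q8_generators mid_def)
next
  case 6 show ?thesis
    by (rule annihilates_delta_qe_of_quadratic[where ia = U17 and ja = V17 and ib = U17 and jb = V17
          and ic = U20 and jc = U20 and ie = U21 and je = U21 and \<beta> = "-1/2" and \<alpha> = "-\<i>/2"])
      (simp_all add: 6 q8_all q8_generators mid_def)
next
  case 7 show ?thesis
    by (rule annihilates_delta_qe_of_quadratic[where ia = U17 and ja = U17 and ib = U17 and jb = U17
          and ic = U20 and jc = V20 and ie = U21 and je = V21 and \<beta> = "1/2" and \<alpha> = "1/2"])
      (simp_all add: 7 q8_all q8_generators mid_def)
next
  case 8 show ?thesis
    by (rule annihilates_delta_qe_of_quadratic[where ia = U17 and ja = V17 and ib = U17 and jb = V17
          and ic = U20 and jc = U20 and ie = U21 and je = U21 and \<beta> = "-1/2" and \<alpha> = "\<i>/2"])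
      (simp_all add: 8 q8_all q8_generators mid_def)
qed

lemma annihilates_delta_of_nonzero:
  assumes "annihilates (graded_fun g0 f) I" "f h0 \<noteq> 0"
  shows "annihilates (graded_fun g0 (\<lambda>h. if h = h0 then 1 else 0)) I"
proof -
  have "annihilates (graded_fun g0 (\<lambda>h. (if h = h0 then 1 else 0) * f h)) I"
    using annihilates_graded_fun_mult[OF annihilates_delta_qe assms(1)] by simp
  then have "annihilates (graded_fun g0 (\<lambda>h. 1 / f h0 * ((if h = h0 then 1 else 0) * f h) + 0)) I"
    by (intro annihilates_graded_fun_add annihilates_graded_fun_zero)
  moreover have "(\<lambda>h. 1 / f h0 * ((if h = h0 then 1 else 0) * f h) + 0) = (\<lambda>h. if h = h0 then 1 else 0)"
    using assms(2) by auto
  ultimately show ?thesis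
    by simp
qed

lemma VA_row_sum_nonzero: "(\<Sum>j\<in>UNIV. VA h i j) \<noteq> 0"
  by (cases h rule: q8_exhaust; cases i) (simp_all add: sum_vb mid_def)

lemma annihilates_delta: "annihilates (graded_fun g0 (\<lambda>h. if h = h0 then 1 else 0)) I"
proof -
  have row: "annihilates (graded_fun (Vgr i) (\<lambda>h. \<Sum>j\<in>UNIV. VA h i j)) I" for i
    by (intro annihilates_graded_fun_sum annihilates_matrix_coeff) simp_all
  have "annihilates (graded_fun (Vgr i) (\<lambda>h. if h = h0 then 1 else 0)) I" for i
    by (rule annihilates_delta_of_nonzero[OF row VA_row_sum_nonzero])
  moreover have "annihilates (graded_fun (qmul (Vgr i) (Vgr k)) (\<lambda>h. if h = h0 then 1 else 0)) I" for i k
    by (rule annihilates_delta_of_nonzero[OF annihilates_graded_fun_mult[OF row row]])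
      (simp add: VA_row_sum_nonzero)
  ultimately show ?thesis
    by (cases g0 rule: q8_exhaust)
      (metis Vgr_qmk qmul_table)+
qed

lemma hopf_ideal_eq_zero: "x \<in> I \<Longrightarrow> x = (\<lambda>_. 0)"
proof (rule ext)
  fix p :: "q8 \<times> q8" assume x: "x \<in> I"
  obtain g0 h0 where p: "p = (g0, h0)"
    by (cases p)
  have "dual_pair (graded_fun g0 (\<lambda>h. if h = h0 then 1 else 0)) x = (\<Sum>q\<in>UNIV. if q = p then x q else 0)"
    unfolding dual_pair_def p by (intro sum.cong) (auto simp: graded_fun_def split: if_splits)
  then have "dual_pair (graded_fun g0 (\<lambda>h. if h = h0 then 1 else 0)) x = x p"
    by simp
  then show "x p = 0"
    using annihilates_delta x unfolding annihilates_def by simp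
qed

end

theorem inner_faithful_V: "inner_faithful (UNIV :: vb set) (grmod Vgr VA)"
  unfolding inner_faithful_def
proof
  assume "\<exists>I. hopf_ideal I \<and> I \<noteq> {\<lambda>_. 0} \<and> (\<forall>x\<in>I. \<forall>v. \<forall>j\<in>(UNIV :: vb set). dvact UNIV (grmod Vgr VA) x v j = 0)"
  then obtain I where "hopf_ideal I" "I \<noteq> {\<lambda>_. 0}"
    and "\<forall>x\<in>I. \<forall>v. \<forall>j\<in>(UNIV :: vb set). dvact UNIV (grmod Vgr VA) x v j = 0"
    by blast
  moreover from this have "(\<lambda>_. 0) \<in> I"
    unfolding hopf_ideal_def csubspace_def by blast
  ultimately show False
    using hopf_ideal_eq_zero by blast
qed

theorem mainTheorem6:
  shows "inner_faithful (UNIV :: vb set) (grmod Vgr VA) \<and>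
    (\<forall>(B :: 'b set) act. finite B \<and> is_module B act \<and> simple_module B act \<longrightarrow>
       (\<exists>m\<in>{1..4::nat}. direct_summand B act {bs :: vb list. length bs = m} (grmod tgr tA)))"
  using inner_faithful_V simple_module_summand_of_tensor_power by blast

end
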